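(* Suppose Assumptions (A1), (A2), (A4) hold, $F^*>-\infty$, and MoSSP-R is run with constant parameters $\rho_k\equiv\rho$, $\mu_k\equiv\mu$, $\alpha_k\equiv\alpha$, $0<\beta\le1$ satisfying $\mu L_\rho\le\frac14$ and $0<32\mu^2L_f^2\le\alpha\le1$. Let $R$ be uniform on $\{0,\dots,K-1\}$ independent of the samples, and set $A:=\frac1{16}+\beta^{-2}+\frac13(\mu/\beta)^2$, $B:=\frac1{16}+\beta^{-2}$. Then $$\max\{\mathbb{E}\|\bm u^{R+1}\|^2,\ \mathbb{E}\|\bm x^{R+1}-\mathrm{prox}_{\mu g}(\bm z^R)\|^2\}\le\frac1K\Big(\frac{(96+768A)\mu L_f^2}{\alpha}+\frac{24A}{\mu}\Big)\big(\mathcal{L}_{\rho,\mu}(\bm w^0)-\mathcal{L}^*\big)+\frac{(48A+6)\mathbb{E}\|\bm e^0\|^2}{\alpha K}+(96A+12)\alpha\sigma^2,$$ and $$\mathbb{E}\|\nabla\bm c(\bm x^{R+1})\bm c(\bm x^{R+1})\|^2\le\frac{2}{\rho^2K}\Big(\frac{(144+768\beta^{-2})\mu L_f^2}{\alpha}+\frac{24B}{\mu}\Big)\big(\mathcal{L}_{\rho,\mu}(\bm w^0)-\mathcal{L}^*\big)+\frac{(12+96B)\mathbb{E}\|\bm e^0\|^2}{\alpha\rho^2K}+\frac{(24+192B)\alpha\sigma^2}{\rho^2}+\frac{18G^2}{\rho^2}.$$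
   Context: Problem data: $f(\bm x)=\mathbb{E}_\xi[\mathbf f(\bm x,\xi)]$ ($\xi\sim\Xi$), $f$ and $\bm c:\mathbb{R}^n\to\mathbb{R}^m$ continuously differentiable, $h:\mathbb{R}^n\to\mathbb{R}\cup\{+\infty\}$, $g:\mathbb{R}^n\to\mathbb{R}$ proper closed convex; $F^*:=\inf_{\bm x}\{f+h-g\}(\bm x)$; $\nabla\bm c(\bm x):=J_{\bm c}(\bm x)^\top$; $Q_\rho(\bm x):=f(\bm x)+\frac\rho2\|\bm c(\bm x)\|^2$; $\mathrm{prox}_{\mu\varphi}$ and Moreau envelope $\mathcal{M}_{\mu\varphi}(\bm z)=\min_{\bm x}\{\varphi(\bm x)+\frac1{2\mu}\|\bm x-\bm z\|^2\}$. Potential $\mathcal{L}_{\rho,\mu}(\bm x,\bm z):=Q_\rho(\bm x)+h(\bm x)+\frac1{2\mu}\|\bm x-\bm z\|^2-\mathcal{M}_{\mu g}(\bm z)$; $\mathcal{L}^*:=F^*-\frac{G^2\bar\mu}2$ with $\bar\mu\ge\mu$ a constant. $L_\rho:=\rho\tilde L$, $\tilde L=\rho_0^{-1}L_f+G^2+CL_c$ with $\rho_0\le\rho$. (A1): $f$ is $L_f$-smooth, $\nabla\bm c$ is $L_c$-Lipschitz, and there are $C,G>0$ with $\|\nabla f(\bm x)\|\le G$, all subgradients of $h$ and of $g$ have norm $\le G$, $\|\nabla\bm c(\bm x)\|\le G$, $\|\bm c(\bm x)\|\le C$ for all $\bm x$. (A2): $\mathbb{E}_\xi[\nabla\mathbf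 f(\bm x,\xi)]=\nabla f(\bm x)$, $\mathbb{E}_\xi\|\nabla\mathbf f(\bm x,\xi)-\nabla f(\bm x)\|^2\le\sigma^2$. (A4): for a.e. $\xi$, $\mathbf f(\cdot,\xi)$ differentiable and $\mathbb{E}_\xi\|\nabla\mathbf f(\bm x,\xi)-\nabla\mathbf f(\bm y,\xi)\|^2\le L_f^2\|\bm x-\bm y\|^2$. MoSSP-R: $\bm x^0=\bm z^0$; $\bm d^0=\frac1{b_0}\sum_{j=1}^{b_0}\nabla\mathbf f(\bm x^0,\xi^0_j)$; for $k\ge1$ fresh i.i.d. $\xi^k$, $\bm d^k=\nabla\mathbf f(\bm x^k,\xi^k)+(1-\alpha)(\bm d^{k-1}-\nabla\mathbf f(\bm x^{k-1},\xi^k))$; $\bm D^k=\bm d^k+\rho\nabla\bm c(\bm x^k)\bm c(\bm x^k)$; $\bm x^{k+1}=\mathrm{prox}_{\mu h}(\bm z^k-\mu\bm D^k)$, $\bm z^{k+1}=\bm z^k-\beta(\mathrm{prox}_{\mu g}(\bm z^k)-\bm x^{k+1})$; $\bm w^k=(\bm x^k,\bm z^k)$; $\bm e^k:=\bm D^k-\nabla Q_\rho(\bm x^k)$; $\bm u^{k+1}:=\nabla Q_\rho(\bm x^{k+1})-\bm D^k+\mu^{-1}(\mathrm{prox}_{\mu g}(\bm z^k)-\bm x^{k+1})$. *)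

theory Defs
  imports "HOL-Analysis.Analysis" "HOL-Probability.Probability"
begin

definition proper_closed_convex :: "('a::euclidean_space \<Rightarrow> ereal) \<Rightarrow> bool" where
  "proper_closed_convex \<phi> \<longleftrightarrow>
     (\<forall>x. \<phi> x \<noteq> -\<infinity>) \<and> (\<exists>x. \<phi> x \<noteq> \<infinity>) \<and>
     closed {(x, t::real). \<phi> x \<le> ereal t} \<and>
     convex {(x, t::real). \<phi> x \<le> ereal t}"

definition is_subgradient :: "('a::euclidean_space \<Rightarrow> ereal) \<Rightarrow> 'a \<Rightarrow> 'a \<Rightarrow> bool" where
  "is_subgradient \<phi> x v \<longleftrightarrow> \<bar>\<phi> x\<bar> \<noteq> \<infinity> \<and> (\<forall>y. \<phi> y \<ge> \<phi> x + ereal (v \<bullet> (y - x)))"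

definition prox :: "real \<Rightarrow> ('a::euclidean_space \<Rightarrow> ereal) \<Rightarrow> 'a \<Rightarrow> 'a" where
  "prox \<mu> \<phi> z = (SOME x. \<forall>y. \<phi> x + ereal ((norm (x - z))\<^sup>2 / (2 * \<mu>))
                               \<le> \<phi> y + ereal ((norm (y - z))\<^sup>2 / (2 * \<mu>)))"

definition moreau :: "real \<Rightarrow> ('a::euclidean_space \<Rightarrow> real) \<Rightarrow> 'a \<Rightarrow> real" where
  "moreau \<mu> g z = (INF x. g x + (norm (x - z))\<^sup>2 / (2 * \<mu>))"

text \<open>nabla c(x) c(x) = J_c(x)^T c(x), with c' x the derivative (Jacobian) of c at x.\<close>
definition grad_pen :: "('a::euclidean_space \<Rightarrow> 'b::euclidean_space) \<Rightarrow> ('a \<Rightarrow> 'a \<Rightarrow> 'b) \<Rightarrow> 'a \<Rightarrow> 'a" where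
  "grad_pen c c' x = adjoint (c' x) (c x)"

text \<open>MoSSP-R iterates (x^k, z^k, d^k) driven by a sample sequence omega:
  omega 0 .. omega (b0-1) form the initial mini-batch xi^0_j, and omega (b0 + k) is xi^(k+1).\<close>
primrec mossp :: "('a::euclidean_space \<Rightarrow> 'c \<Rightarrow> 'a) \<Rightarrow> ('a \<Rightarrow> 'b::euclidean_space) \<Rightarrow> ('a \<Rightarrow> 'a \<Rightarrow> 'b)
   \<Rightarrow> ('a \<Rightarrow> ereal) \<Rightarrow> ('a \<Rightarrow> real) \<Rightarrow> real \<Rightarrow> real \<Rightarrow> real \<Rightarrow> real \<Rightarrow> nat \<Rightarrow> 'a
   \<Rightarrow> (nat \<Rightarrow> 'c) \<Rightarrow> nat \<Rightarrow> 'a \<times> 'a \<times> 'a" where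
  "mossp gf c c' h g \<rho> \<mu> \<alpha> \<beta> b0 x0 \<omega> 0 =
     (x0, x0, (1 / real b0) *\<^sub>R (\<Sum>j<b0. gf x0 (\<omega> j)))"
| "mossp gf c c' h g \<rho> \<mu> \<alpha> \<beta> b0 x0 \<omega> (Suc k) =
     (let (x, z, d) = mossp gf c c' h g \<rho> \<mu> \<alpha> \<beta> b0 x0 \<omega> k;
          D = d + \<rho> *\<^sub>R grad_pen c c' x;
          x' = prox \<mu> h (z - \<mu> *\<^sub>R D);
          z' = z - \<beta> *\<^sub>R (prox \<mu> (\<lambda>y. ereal (g y)) z - x');
          \<xi> = \<omega> (b0 + k);
          d' = gf x' \<xi> + (1 - \<alpha>) *\<^sub>R (d - gf x \<xi>)
      in (x', z', d'))"

definition potential :: "('a::euclidean_space \<Rightarrow> real) \<Rightarrow> ('a \<Rightarrow> 'b::euclidean_space) \<Rightarrow> ('a \<Rightarrow> ereal)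
   \<Rightarrow> ('a \<Rightarrow> real) \<Rightarrow> real \<Rightarrow> real \<Rightarrow> 'a \<Rightarrow> 'a \<Rightarrow> ereal" where
  "potential f c h g \<rho> \<mu> x z =
     ereal (f x + \<rho> / 2 * (norm (c x))\<^sup>2) + h x + ereal ((norm (x - z))\<^sup>2 / (2 * \<mu>))
     - ereal (moreau \<mu> g z)"

end

theory Submission
  imports Defs
begin

text \<open>
  The potential \<open>L(x, z) = Q(x) + h(x) + \<parallel>x - z\<parallel>\<^sup>2/(2\<mu>) - M\<^sub>\<mu>\<^sub>g(z)\<close> decreases along
  MoSSP-R up to the estimator error. The \<open>x\<close>-update is a proximal gradient step on \<open>Q + h\<close>, which
  loses only \<open>2\<mu>\<parallel>e\<^sup>k\<parallel>\<^sup>2\<close> because \<open>D\<^sup>k\<close> replaces \<open>\<nabla>Q(x\<^sup>k)\<close>; the relaxed \<open>z\<close>-update gains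
  \<open>\<beta>/(2\<mu>) \<parallel>x\<^sup>k\<^sup>+\<^sup>1 - prox(z\<^sup>k)\<parallel>\<^sup>2\<close> because the Moreau envelope lies above its tangent planes.
  Since every sample is fresh, the momentum error satisfies
  \<open>E\<parallel>e\<^sup>k\<^sup>+\<^sup>1\<parallel>\<^sup>2 \<le> (1 - \<alpha>)\<^sup>2 E\<parallel>e\<^sup>k\<parallel>\<^sup>2 + 2\<alpha>\<^sup>2\<sigma>\<^sup>2 + 2L\<^sub>f\<^sup>2 E\<parallel>x\<^sup>k\<^sup>+\<^sup>1 - x\<^sup>k\<parallel>\<^sup>2\<close>.
  In the Lyapunov function \<open>E L + (2\<mu>/\<alpha>) E\<parallel>e\<^sup>k\<parallel>\<^sup>2\<close> the condition \<open>32\<mu>\<^sup>2L\<^sub>f\<^sup>2 \<le> \<alpha>\<close> lets the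
  step decrease pay for the injected variance, so telescoping bounds the sums of
  \<open>E\<parallel>x\<^sup>k\<^sup>+\<^sup>1 - x\<^sup>k\<parallel>\<^sup>2\<close>, \<open>E\<parallel>x\<^sup>k\<^sup>+\<^sup>1 - prox(z\<^sup>k)\<parallel>\<^sup>2\<close> and \<open>E\<parallel>e\<^sup>k\<parallel>\<^sup>2\<close> by the initial gap, the initial
  error and \<open>K\<alpha>\<sigma>\<^sup>2\<close>. These sums control \<open>\<parallel>u\<^sup>k\<^sup>+\<^sup>1\<parallel>\<^sup>2\<close>; the optimality conditions of the two
  prox maps express \<open>\<rho>\<nabla>c c\<close> through \<open>u\<^sup>k\<^sup>+\<^sup>1\<close> and three vectors of norm at most \<open>G\<close>; and the
  uniform index \<open>R\<close> turns the sums into averages.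
\<close>

section \<open>Proximal maps of proper closed convex functions\<close>

lemma proper_closed_convexD:
  assumes "proper_closed_convex \<phi>"
  shows "\<And>x. \<phi> x \<noteq> -\<infinity>" "\<exists>x. \<phi> x \<noteq> \<infinity>"
    "closed {(x, t::real). \<phi> x \<le> ereal t}" "convex {(x, t::real). \<phi> x \<le> ereal t}"
  using assms unfolding proper_closed_convex_def by auto

lemma proper_closed_convex_finite_point:
  assumes "proper_closed_convex \<phi>"
  obtains x a where "\<phi> x = ereal a"
proof -
  obtain x where "\<phi> x \<noteq> \<infinity>" using proper_closed_convexD(2)[OF assms] by blast
  with proper_closed_convexD(1)[OF assms, of x] show ?thesis
    using that by (cases "\<phi> x") auto
qed

lemma power2_norm_add_scaleR:
  fixes p d :: "'a::real_inner"
  shows "(norm (p + t *\<^sub>R d))\<^sup>2 = (norm p)\<^sup>2 + 2 * t * (p \<bullet> d) + t\<^sup>2 * (norm d)\<^sup>2"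
  unfolding power2_norm_eq_inner
  by (simp add: inner_add_left inner_add_right inner_commute algebra_simps power2_eq_square)

text \<open>Separate a point strictly below the graph from the closed convex epigraph.\<close>

lemma proper_closed_convex_affine_minorant:
  fixes \<phi> :: "'a::euclidean_space \<Rightarrow> ereal"
  assumes "proper_closed_convex \<phi>"
  obtains v c where "\<And>x. ereal (c + v \<bullet> x) \<le> \<phi> x"
proof -
  note P = proper_closed_convexD[OF assms]
  obtain x1 r1 where r1: "\<phi> x1 = ereal r1" using proper_closed_convex_finite_point[OF assms] .
  define S where "S = {(x, t::real). \<phi> x \<le> ereal t}"
  have "(x1, r1 - 1) \<notin> S" using r1 by (simp add: S_def)
  from separating_hyperplane_closed_point[OF P(4)[folded S_def] P(3)[folded S_def] this]
  obtain a b where ab: "inner a (x1, r1 - 1) < b" "\<forall>p\<in>S. inner a p > b" by blast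
  obtain a1 a2 where a: "a = (a1, a2)" by (cases a)
  have "(x1, r1) \<in> S" using r1 by (simp add: S_def)
  with ab have "a1 \<bullet> x1 + a2 * r1 > b" "a1 \<bullet> x1 + a2 * (r1 - 1) < b"
    by (auto simp: a inner_Pair)
  hence a2: "a2 > 0" by (simp add: algebra_simps)
  have "ereal (b / a2 + (- (1 / a2) *\<^sub>R a1) \<bullet> x) \<le> \<phi> x" for x
  proof (cases "\<phi> x")
    case (real t)
    hence "(x, t) \<in> S" by (simp add: S_def)
    with ab have "a1 \<bullet> x + a2 * t > b" by (auto simp: a inner_Pair)
    hence "b / a2 + (- (1 / a2) *\<^sub>R a1) \<bullet> x \<le> t" using a2 by (simp add: field_simps)
    thus ?thesis using real by simp
  qed (use P(1) in auto)
  thus ?thesis using that by blast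
qed

lemma ereal_add_le_ereal_iff: "\<phi> + ereal a \<le> ereal t \<longleftrightarrow> \<phi> \<le> ereal (t - a)"
  by (cases \<phi>) auto

text \<open>Minimise the height over a compact piece of the epigraph.\<close>

lemma closed_epigraph_attains_min:
  fixes \<Psi> :: "'a::euclidean_space \<Rightarrow> ereal"
  assumes closed: "closed {(x, t::real). \<Psi> x \<le> ereal t}"
    and x1: "\<Psi> x1 = ereal K1"
    and sublevel: "\<And>y. \<Psi> y \<le> ereal K1 \<Longrightarrow> norm (y - w) \<le> R"
    and lower: "\<And>y. norm (y - w) \<le> R \<Longrightarrow> ereal (- B) \<le> \<Psi> y"
  obtains x where "\<And>y. \<Psi> x \<le> \<Psi> y"
proof -
  define T where "T = {(x, t::real). \<Psi> x \<le> ereal t} \<inter> (cball w R \<times> {-B..K1})"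
  have "compact T" unfolding T_def
    by (intro closed_Int_compact closed compact_Times compact_cball compact_Icc)
  have "(x1, K1) \<in> T"
    using x1 sublevel[of x1] lower[of x1] by (auto simp: T_def dist_norm norm_minus_commute)
  hence "T \<noteq> {}" by auto
  from continuous_attains_inf[OF \<open>compact T\<close> this continuous_on_snd[OF continuous_on_id]]
  obtain xs ts where xsT: "(xs, ts) \<in> T" and min: "\<And>p. p \<in> T \<Longrightarrow> ts \<le> snd p"
    by fastforce
  have xs: "\<Psi> xs \<le> ereal ts" "ts \<le> K1" using xsT unfolding T_def by auto
  have "ereal ts \<le> \<Psi> y" for y
  proof (cases "\<Psi> y \<le> ereal K1")
    case True
    have ny: "norm (y - w) \<le> R" using sublevel True by simp
    then obtain s where s: "\<Psi> y = ereal s"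
      using True lower[of y] by (cases "\<Psi> y") auto
    hence "(y, s) \<in> T" unfolding T_def using True ny lower[OF ny]
      by (auto simp: dist_norm norm_minus_commute)
    thus ?thesis using min s by fastforce
  next
    case False
    thus ?thesis using xs(2) by (meson ereal_less_eq(3) linear order_trans)
  qed
  thus ?thesis using that xs(1) order_trans by blast
qed

lemma closed_epigraph_add_continuous:
  fixes \<phi> :: "'a::euclidean_space \<Rightarrow> ereal"
  assumes "closed {(x, t::real). \<phi> x \<le> ereal t}" and q: "continuous_on UNIV q"
  shows "closed {(x, t::real). \<phi> x + ereal (q x) \<le> ereal t}"
proof -
  have "{(x, t::real). \<phi> x + ereal (q x) \<le> ereal t}
      = (\<lambda>p. (fst p, snd p - q (fst p))) -` {(x, t::real). \<phi> x \<le> ereal t}"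
    by (auto simp: ereal_add_le_ereal_iff)
  also have "closed \<dots>"
    by (rule closed_vimage[OF assms(1)]) (intro continuous_intros continuous_on_compose2[OF q]; simp)
  finally show ?thesis .
qed

lemma le_of_power2_le_linear:
  fixes r a b :: real
  assumes "a \<ge> 0" "b \<ge> 0" "r\<^sup>2 \<le> a + b * r"
  shows "r \<le> a + b + 1"
proof (rule ccontr)
  assume "\<not> r \<le> a + b + 1"
  hence r: "r > a + b + 1" by simp
  have "r * (a + b + 1) < r * r" using r assms by (intro mult_strict_left_mono) auto
  moreover have "a + 1 \<le> r * (a + 1)" using r assms mult_right_mono[of 1 r "a + 1"] by simp
  ultimately show False using assms(3) by (simp add: power2_eq_square algebra_simps)
qed

text \<open>The affine minorant makes the prox objective coercive, so a minimiser exists by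
  \<open>closed_epigraph_attains_min\<close>.\<close>

lemma prox_objective_has_minimizer:
  fixes \<phi> :: "'a::euclidean_space \<Rightarrow> ereal"
  assumes pcc: "proper_closed_convex \<phi>" and mu: "\<mu> > 0"
  shows "\<exists>x. \<forall>y. \<phi> x + ereal ((norm (x - w))\<^sup>2 / (2 * \<mu>)) \<le> \<phi> y + ereal ((norm (y - w))\<^sup>2 / (2 * \<mu>))"
proof -
  define q where "q x = (norm (x - w))\<^sup>2 / (2 * \<mu>)" for x
  define \<Psi> where "\<Psi> x = \<phi> x + ereal (q x)" for x
  obtain v c where vc: "\<And>x. ereal (c + v \<bullet> x) \<le> \<phi> x"
    using proper_closed_convex_affine_minorant[OF pcc] by blast
  obtain x1 r1 where r1: "\<phi> x1 = ereal r1" using proper_closed_convex_finite_point[OF pcc] .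
  define K1 where "K1 = r1 + q x1"
  have x1: "\<Psi> x1 = ereal K1" by (simp add: \<Psi>_def r1 K1_def)
  have Psi_lb: "ereal (c + v \<bullet> x + q x) \<le> \<Psi> x" for x
    using vc[of x] unfolding \<Psi>_def by (cases "\<phi> x") auto
  define K2 where "K2 = \<bar>K1 - c - v \<bullet> w\<bar>"
  define R where "R = 2 * \<mu> * K2 + 2 * \<mu> * norm v + 1"
  have sublevel: "norm (y - w) \<le> R" if "\<Psi> y \<le> ereal K1" for y
  proof -
    have "c + v \<bullet> y + q y \<le> K1" using Psi_lb[of y] that by (meson ereal_less_eq(3) order_trans)
    moreover have "v \<bullet> y \<ge> v \<bullet> w - norm v * norm (y - w)"
      using Cauchy_Schwarz_ineq2[of v "y - w"] by (simp add: inner_diff_right)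
    ultimately have "(norm (y - w))\<^sup>2 / (2 * \<mu>) \<le> K2 + norm v * norm (y - w)"
      unfolding q_def K2_def by linarith
    hence "(norm (y - w))\<^sup>2 \<le> 2 * \<mu> * K2 + 2 * \<mu> * norm v * norm (y - w)"
      using mu by (simp add: field_simps)
    thus ?thesis unfolding R_def using mu by (intro le_of_power2_le_linear) (auto simp: K2_def)
  qed
  have lower: "ereal (- (\<bar>c\<bar> + norm v * (norm w + R))) \<le> \<Psi> y" if "norm (y - w) \<le> R" for y
  proof -
    have "norm y \<le> norm w + R" using that norm_triangle_sub[of y w] by (simp add: norm_minus_commute)
    hence "- (norm v * (norm w + R)) \<le> v \<bullet> y"
      using Cauchy_Schwarz_ineq2[of v y] mult_left_mono[OF _ norm_ge_zero, of "norm y" "norm w + R" v]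
      by linarith
    moreover have "q y \<ge> 0" using mu by (simp add: q_def)
    ultimately have "- (\<bar>c\<bar> + norm v * (norm w + R)) \<le> c + v \<bullet> y + q y" by linarith
    thus ?thesis using Psi_lb[of y] by (meson ereal_less_eq(3) order_trans)
  qed
  have "continuous_on UNIV q" using mu unfolding q_def by (intro continuous_intros) auto
  from closed_epigraph_attains_min[OF closed_epigraph_add_continuous[OF proper_closed_convexD(3)[OF pcc] this,
        folded \<Psi>_def] x1 sublevel lower]
  show ?thesis unfolding \<Psi>_def q_def by blast
qed

lemma prox_minimizes:
  fixes \<phi> :: "'a::euclidean_space \<Rightarrow> ereal"
  assumes "proper_closed_convex \<phi>" and "\<mu> > 0"
  shows "\<phi> (prox \<mu> \<phi> w) + ereal ((norm (prox \<mu> \<phi> w - w))\<^sup>2 / (2 * \<mu>))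
           \<le> \<phi> y + ereal ((norm (y - w))\<^sup>2 / (2 * \<mu>))"
  using someI_ex[OF prox_objective_has_minimizer[OF assms, of w]] unfolding prox_def by blast

lemma prox_value_finite:
  fixes \<phi> :: "'a::euclidean_space \<Rightarrow> ereal"
  assumes pcc: "proper_closed_convex \<phi>" and mu: "\<mu> > 0"
  shows "\<bar>\<phi> (prox \<mu> \<phi> w)\<bar> \<noteq> \<infinity>"
proof -
  obtain x1 r1 where "\<phi> x1 = ereal r1" using proper_closed_convex_finite_point[OF pcc] .
  with prox_minimizes[OF pcc mu, of w x1] have "\<phi> (prox \<mu> \<phi> w) \<noteq> \<infinity>" by auto
  thus ?thesis using proper_closed_convexD(1)[OF pcc] by auto
qed

lemma proper_closed_convex_convex_ineq:
  fixes \<phi> :: "'a::euclidean_space \<Rightarrow> ereal"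
  assumes pcc: "proper_closed_convex \<phi>" and "\<phi> x = ereal a" "\<phi> y = ereal b" "0 \<le> t" "t \<le> 1"
  shows "\<phi> ((1 - t) *\<^sub>R x + t *\<^sub>R y) \<le> ereal ((1 - t) * a + t * b)"
proof -
  have "(x, a) \<in> {(x, t::real). \<phi> x \<le> ereal t}" "(y, b) \<in> {(x, t::real). \<phi> x \<le> ereal t}"
    using assms by auto
  from convexD[OF proper_closed_convexD(4)[OF pcc] this, of "1 - t" t] assms(4,5)
  show ?thesis by simp
qed

lemma le_of_le_add_small_multiple:
  fixes a b C :: real
  assumes "\<And>t. 0 < t \<Longrightarrow> t \<le> 1 \<Longrightarrow> a \<le> b + t * C" "C \<ge> 0"
  shows "a \<le> b"
proof (rule ccontr)
  assume "\<not> a \<le> b"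
  define t where "t = min 1 ((a - b) / (2 * C + 1))"
  have t: "0 < t" "t \<le> 1" using \<open>\<not> a \<le> b\<close> assms(2) by (auto simp: t_def)
  have "t * C \<le> ((a - b) / (2 * C + 1)) * C" using assms(2) by (intro mult_right_mono) (auto simp: t_def)
  also have "\<dots> < a - b"
    using \<open>\<not> a \<le> b\<close> assms(2) mult_strict_left_mono[of C "2 * C + 1" "a - b"]
    by (simp add: field_simps)
  finally show False using assms(1)[OF t] by linarith
qed

lemma subgradient_ineq:
  assumes "is_subgradient \<phi> x v" "\<phi> x = ereal a" "\<phi> y = ereal b"
  shows "a + v \<bullet> (y - x) \<le> b"
  using assms unfolding is_subgradient_def by (metis ereal_less_eq(3) plus_ereal.simps(1))

text \<open>Optimality of \<open>prox\<close> against the segment towards \<open>y\<close>: the first-order term survives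
  division by the step \<open>t\<close>, the quadratic term vanishes as \<open>t \<rightarrow> 0\<close>.\<close>

lemma prox_subgradient:
  fixes \<phi> :: "'a::euclidean_space \<Rightarrow> ereal"
  assumes pcc: "proper_closed_convex \<phi>" and mu: "\<mu> > 0"
  shows "is_subgradient \<phi> (prox \<mu> \<phi> w) ((1 / \<mu>) *\<^sub>R (w - prox \<mu> \<phi> w))"
proof -
  define x where "x = prox \<mu> \<phi> w"
  define v where "v = (1 / \<mu>) *\<^sub>R (w - x)"
  have fin: "\<bar>\<phi> x\<bar> \<noteq> \<infinity>" unfolding x_def by (rule prox_value_finite[OF pcc mu])
  then obtain a where a: "\<phi> x = ereal a" by (cases "\<phi> x") auto
  have "\<phi> x + ereal (v \<bullet> (y - x)) \<le> \<phi> y" for y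
  proof (cases "\<phi> y")
    case (real b)
    have "a + v \<bullet> (y - x) \<le> b + t * ((norm (y - x))\<^sup>2 / (2 * \<mu>))" if t: "0 < t" "t \<le> 1" for t
    proof -
      define xt where "xt = (1 - t) *\<^sub>R x + t *\<^sub>R y"
      have "\<phi> x + ereal ((norm (x - w))\<^sup>2 / (2 * \<mu>)) \<le> \<phi> xt + ereal ((norm (xt - w))\<^sup>2 / (2 * \<mu>))"
        unfolding x_def by (rule prox_minimizes[OF pcc mu])
      also have "\<dots> \<le> ereal ((1 - t) * a + t * b) + ereal ((norm (xt - w))\<^sup>2 / (2 * \<mu>))"
        unfolding xt_def using proper_closed_convex_convex_ineq[OF pcc a real] t
        by (intro add_right_mono) simp
      finally have "a + (norm (x - w))\<^sup>2 / (2 * \<mu>) \<le> (1 - t) * a + t * b + (norm (xt - w))\<^sup>2 / (2 * \<mu>)"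
        by (simp add: a)
      moreover have "(norm (xt - w))\<^sup>2 = (norm (x - w))\<^sup>2 + 2 * t * ((x - w) \<bullet> (y - x)) + t\<^sup>2 * (norm (y - x))\<^sup>2"
        using power2_norm_add_scaleR[of "x - w" t "y - x"] by (simp add: xt_def algebra_simps)
      ultimately have "t * a \<le> t * (b + ((x - w) \<bullet> (y - x)) / \<mu> + t * ((norm (y - x))\<^sup>2 / (2 * \<mu>)))"
        using mu by (simp add: field_simps power2_eq_square)
      hence "a \<le> b + ((x - w) \<bullet> (y - x)) / \<mu> + t * ((norm (y - x))\<^sup>2 / (2 * \<mu>))"
        using t by simp
      moreover have "v \<bullet> (y - x) = - (((x - w) \<bullet> (y - x)) / \<mu>)"
        unfolding v_def by (simp add: inner_diff_left diff_divide_distrib)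
      ultimately show ?thesis by linarith
    qed
    hence "a + v \<bullet> (y - x) \<le> b" by (rule le_of_le_add_small_multiple) (use mu in auto)
    thus ?thesis using a real by simp
  qed (use a proper_closed_convexD(1)[OF pcc] in auto)
  thus ?thesis unfolding is_subgradient_def v_def x_def using fin x_def by auto
qed

lemma prox_nonexpansive:
  fixes \<phi> :: "'a::euclidean_space \<Rightarrow> ereal"
  assumes pcc: "proper_closed_convex \<phi>" and mu: "\<mu> > 0"
  shows "norm (prox \<mu> \<phi> a - prox \<mu> \<phi> b) \<le> norm (a - b)"
proof -
  define x y where "x = prox \<mu> \<phi> a" and "y = prox \<mu> \<phi> b"
  obtain p where p: "\<phi> x = ereal p"
    using prox_value_finite[OF pcc mu, of a] unfolding x_def by (cases "\<phi> x") auto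
  obtain r where r: "\<phi> y = ereal r"
    using prox_value_finite[OF pcc mu, of b] unfolding y_def by (cases "\<phi> y") auto
  have "p + ((1 / \<mu>) *\<^sub>R (a - x)) \<bullet> (y - x) \<le> r"
    using subgradient_ineq[OF prox_subgradient[OF pcc mu, of a, folded x_def] p r] .
  moreover have "r + ((1 / \<mu>) *\<^sub>R (b - y)) \<bullet> (x - y) \<le> p"
    using subgradient_ineq[OF prox_subgradient[OF pcc mu, of b, folded y_def] r p] .
  ultimately have "((a - x) \<bullet> (y - x) + (b - y) \<bullet> (x - y)) / \<mu> \<le> 0"
    by (simp add: add_divide_distrib)
  hence "(a - x) \<bullet> (y - x) + (b - y) \<bullet> (x - y) \<le> 0" using mu by (simp add: divide_le_0_iff)
  moreover have "(a - x) \<bullet> (y - x) + (b - y) \<bullet> (x - y) = (norm (x - y))\<^sup>2 - (a - b) \<bullet> (x - y)"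
    by (simp add: power2_norm_eq_inner inner_diff_left inner_diff_right inner_commute algebra_simps)
  ultimately have "(norm (x - y))\<^sup>2 \<le> (a - b) \<bullet> (x - y)" by simp
  also have "\<dots> \<le> norm (a - b) * norm (x - y)" by (rule norm_cauchy_schwarz)
  finally have "norm (x - y) * norm (x - y) \<le> norm (a - b) * norm (x - y)" by (simp add: power2_eq_square)
  hence "norm (x - y) \<le> norm (a - b)"
    by (cases "norm (x - y) = 0") (auto simp: mult_le_cancel_right)
  thus ?thesis unfolding x_def y_def .
qed

lemma continuous_on_prox:
  fixes \<phi> :: "'a::euclidean_space \<Rightarrow> ereal"
  assumes "proper_closed_convex \<phi>" and "\<mu> > 0"
  shows "continuous_on UNIV (prox \<mu> \<phi>)"
  by (rule lipschitz_on_continuous_on[of 1])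
     (auto simp: lipschitz_on_def dist_norm prox_nonexpansive[OF assms])

lemma
  fixes g :: "'a::euclidean_space \<Rightarrow> real"
  assumes pcc: "proper_closed_convex (\<lambda>y. ereal (g y))" and mu: "\<mu> > 0"
  shows moreau_eq_prox: "moreau \<mu> g z = g (prox \<mu> (\<lambda>y. ereal (g y)) z)
           + (norm (prox \<mu> (\<lambda>y. ereal (g y)) z - z))\<^sup>2 / (2 * \<mu>)"
    and moreau_le: "moreau \<mu> g z \<le> g y + (norm (y - z))\<^sup>2 / (2 * \<mu>)"
proof -
  define p where "p = prox \<mu> (\<lambda>y. ereal (g y)) z"
  define F where "F x = g x + (norm (x - z))\<^sup>2 / (2 * \<mu>)" for x
  have pm: "F p \<le> F y" for y
    using prox_minimizes[OF pcc mu, of z y] unfolding p_def F_def by simp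
  have "moreau \<mu> g z = (INF x. F x)" unfolding moreau_def F_def ..
  also have "\<dots> = F p"
    by (rule antisym) (auto intro: cINF_lower[OF bdd_belowI[of _ "F p"]] cINF_greatest pm)
  finally show "moreau \<mu> g z = g p + (norm (p - z))\<^sup>2 / (2 * \<mu>)" unfolding F_def .
  thus "moreau \<mu> g z \<le> g y + (norm (y - z))\<^sup>2 / (2 * \<mu>)" using pm[of y] unfolding F_def by simp
qed

lemma moreau_tangent_le:
  fixes g :: "'a::euclidean_space \<Rightarrow> real" and z z' :: 'a
  assumes pcc: "proper_closed_convex (\<lambda>y. ereal (g y))" and mu: "\<mu> > 0"
  defines "p \<equiv> prox \<mu> (\<lambda>y. ereal (g y)) z"
  shows "moreau \<mu> g z + ((1 / \<mu>) *\<^sub>R (z - p)) \<bullet> (z' - z) \<le> moreau \<mu> g z'"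
proof -
  define p' where "p' = prox \<mu> (\<lambda>y. ereal (g y)) z'"
  have "g p + ((1 / \<mu>) *\<^sub>R (z - p)) \<bullet> (p' - p) \<le> g p'"
    by (rule subgradient_ineq[OF prox_subgradient[OF pcc mu, of z, folded p_def]]) simp_all
  moreover have "((1 / \<mu>) *\<^sub>R (z - p)) \<bullet> (p' - p) - ((1 / \<mu>) *\<^sub>R (z - p)) \<bullet> (z' - z)
      + ((norm (p' - z'))\<^sup>2 - (norm (p - z))\<^sup>2) / (2 * \<mu>) = (norm ((p' - z') - (p - z)))\<^sup>2 / (2 * \<mu>)"
    using mu unfolding power2_norm_eq_inner
    by (simp only: inner_diff_left inner_diff_right inner_scaleR_left inner_scaleR_right)
       (simp only: inner_commute, simp add: field_simps)
  moreover have "(norm ((p' - z') - (p - z)))\<^sup>2 / (2 * \<mu>) \<ge> 0" using mu by simp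
  ultimately show ?thesis
    unfolding moreau_eq_prox[OF pcc mu, of z] moreau_eq_prox[OF pcc mu, of z']
    by (simp add: p_def p'_def diff_divide_distrib)
qed

lemma borel_measurable_proper_closed_convex:
  fixes \<phi> :: "'a::euclidean_space \<Rightarrow> ereal"
  assumes "proper_closed_convex \<phi>"
  shows "\<phi> \<in> borel_measurable borel"
proof (rule borel_measurableI_le)
  note P = proper_closed_convexD[OF assms]
  fix y :: ereal
  show "{x \<in> space borel. \<phi> x \<le> y} \<in> sets borel"
  proof (cases y)
    case (real t)
    have "{x \<in> space borel. \<phi> x \<le> y} = (\<lambda>x. (x, t)) -` {(x, t::real). \<phi> x \<le> ereal t}"
      using real by auto
    moreover have "closed ((\<lambda>x. (x, t)) -` {(x, t::real). \<phi> x \<le> ereal t})"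
      by (rule closed_vimage[OF P(3)]) (intro continuous_intros)
    ultimately show ?thesis by simp
  qed (use P(1) in auto)
qed

section \<open>Smoothness and the constraint penalty\<close>

lemma descent_lemma:
  fixes F :: "'a::real_inner \<Rightarrow> real"
  assumes der: "\<And>y. (F has_derivative (\<lambda>v. gF y \<bullet> v)) (at y)"
    and lip: "\<And>y y'. norm (gF y - gF y') \<le> L * norm (y - y')"
  shows "F y \<le> F x + gF x \<bullet> (y - x) + L / 2 * (norm (y - x))\<^sup>2"
proof -
  define d where "d = y - x"
  define \<psi> where "\<psi> t = F (x + t *\<^sub>R d) - t * (gF x \<bullet> d) - L / 2 * t\<^sup>2 * (norm d)\<^sup>2" for t :: real
  have D1: "((\<lambda>t. F (x + t *\<^sub>R d)) has_field_derivative (gF (x + t *\<^sub>R d) \<bullet> d)) (at t)" for t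
  proof -
    have "((\<lambda>t. x + t *\<^sub>R d) has_derivative (\<lambda>s. s *\<^sub>R d)) (at t)"
      by (auto intro!: derivative_eq_intros)
    from has_derivative_compose[OF this der]
    show ?thesis by (simp add: has_field_derivative_def mult_commute_abs)
  qed
  have D: "(\<psi> has_field_derivative (gF (x + t *\<^sub>R d) \<bullet> d - gF x \<bullet> d - L * t * (norm d)\<^sup>2)) (at t)" for t
    unfolding \<psi>_def by (rule derivative_eq_intros D1 refl | simp)+
  have "\<psi> 1 \<le> \<psi> 0"
  proof (rule DERIV_nonpos_imp_nonincreasing[of 0 1 \<psi>])
    fix t :: real assume t: "0 \<le> t" "t \<le> 1"
    have "gF (x + t *\<^sub>R d) \<bullet> d - gF x \<bullet> d = (gF (x + t *\<^sub>R d) - gF x) \<bullet> d" by (simp add: inner_diff_left)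
    also have "\<dots> \<le> norm (gF (x + t *\<^sub>R d) - gF x) * norm d" by (rule norm_cauchy_schwarz)
    also have "\<dots> \<le> (L * norm (t *\<^sub>R d)) * norm d" using lip[of "x + t *\<^sub>R d" x] by (intro mult_right_mono) auto
    also have "\<dots> = L * t * (norm d)\<^sup>2" using t by (simp add: power2_eq_square)
    finally show "\<exists>y. (\<psi> has_real_derivative y) (at t) \<and> y \<le> 0" using D[of t] by auto
  qed simp
  thus ?thesis unfolding \<psi>_def d_def by simp
qed

locale bounded_constraint =
  fixes c :: "'a::euclidean_space \<Rightarrow> 'b::euclidean_space" and c' :: "'a \<Rightarrow> 'a \<Rightarrow> 'b"
    and G C Lc :: real
  assumes c_deriv: "\<forall>y. (c has_derivative c' y) (at y)"
    and c_lip: "\<forall>y y'. onorm (\<lambda>v. adjoint (c' y) v - adjoint (c' y') v) \<le> Lc * norm (y - y')"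
    and Dc_bd: "\<forall>y. onorm (adjoint (c' y)) \<le> G"
    and c_bd: "\<forall>y. norm (c y) \<le> C"
begin

lemma linear_c': "linear (c' y)"
  using c_deriv has_derivative_bounded_linear bounded_linear.linear by blast

lemma bounded_linear_adjoint_c': "bounded_linear (adjoint (c' y))"
  using adjoint_linear[OF linear_c'] linear_conv_bounded_linear by blast

lemma norm_adjoint_c'_le: "norm (adjoint (c' y) v) \<le> G * norm v"
  using onorm[OF bounded_linear_adjoint_c', of y v] Dc_bd by (meson mult_right_mono norm_ge_zero order_trans)

lemma G_nonneg: "G \<ge> 0"
  using onorm_pos_le[OF bounded_linear_adjoint_c'] Dc_bd by (meson order_trans)

lemma C_nonneg: "C \<ge> 0"
  using c_bd norm_ge_zero order_trans by blast

lemma norm_c'_le: "norm (c' y v) \<le> G * norm v"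
proof -
  have "(norm (c' y v))\<^sup>2 = v \<bullet> adjoint (c' y) (c' y v)"
    by (simp add: adjoint_works[OF linear_c'] power2_norm_eq_inner)
  also have "\<dots> \<le> norm v * norm (adjoint (c' y) (c' y v))" by (rule norm_cauchy_schwarz)
  also have "\<dots> \<le> norm v * (G * norm (c' y v))" by (intro mult_left_mono norm_adjoint_c'_le) auto
  finally have "norm (c' y v) * norm (c' y v) \<le> (G * norm v) * norm (c' y v)"
    by (simp add: power2_eq_square algebra_simps)
  thus ?thesis using G_nonneg by (cases "norm (c' y v) = 0") (auto simp: mult_le_cancel_right)
qed

lemma c_lipschitz: "norm (c y - c y') \<le> G * norm (y - y')"
proof -
  have "onorm (c' x) \<le> G" for x
    using norm_c'_le G_nonneg by (intro onorm_bound) auto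
  thus ?thesis using differentiable_bound[of UNIV c c' G y y'] c_deriv by auto
qed

lemma Lc_nonneg: "Lc \<ge> 0"
proof -
  obtain b :: 'a where b: "norm b = 1" using vector_choose_size[of 1] by auto
  have "bounded_linear (\<lambda>v. adjoint (c' 0) v - adjoint (c' b) v)"
    by (intro bounded_linear_sub bounded_linear_adjoint_c')
  from onorm_pos_le[OF this] c_lip[rule_format, of 0 b] b show ?thesis by simp
qed

lemma grad_pen_lipschitz: "norm (grad_pen c c' y - grad_pen c c' y') \<le> (G\<^sup>2 + C * Lc) * norm (y - y')"
proof -
  have bl: "bounded_linear (\<lambda>v. adjoint (c' y) v - adjoint (c' y') v)"
    by (intro bounded_linear_sub bounded_linear_adjoint_c')
  have "grad_pen c c' y - grad_pen c c' y'
      = adjoint (c' y) (c y - c y') + (adjoint (c' y) (c y') - adjoint (c' y') (c y'))"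
    unfolding grad_pen_def using linear_diff[OF adjoint_linear[OF linear_c']] by simp
  hence "norm (grad_pen c c' y - grad_pen c c' y')
      \<le> norm (adjoint (c' y) (c y - c y')) + norm (adjoint (c' y) (c y') - adjoint (c' y') (c y'))"
    by (simp add: norm_triangle_ineq)
  also have "norm (adjoint (c' y) (c y - c y')) \<le> G * (G * norm (y - y'))"
    using norm_adjoint_c'_le[of y "c y - c y'"] c_lipschitz[of y y'] G_nonneg
    by (meson mult_left_mono order_trans)
  also have "norm (adjoint (c' y) (c y') - adjoint (c' y') (c y'))
      \<le> onorm (\<lambda>v. adjoint (c' y) v - adjoint (c' y') v) * norm (c y')"
    using onorm[OF bl] by simp
  also have "\<dots> \<le> (Lc * norm (y - y')) * C"
    using c_lip c_bd onorm_pos_le[OF bl] Lc_nonneg by (intro mult_mono) auto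
  finally show ?thesis by (simp add: algebra_simps power2_eq_square)
qed

lemma continuous_on_grad_pen: "continuous_on UNIV (grad_pen c c')"
  by (rule lipschitz_on_continuous_on[of "G\<^sup>2 + C * Lc"])
     (auto simp: lipschitz_on_def dist_norm grad_pen_lipschitz C_nonneg Lc_nonneg)

lemma has_derivative_half_norm_c_sq:
  "((\<lambda>y. (norm (c y))\<^sup>2 / 2) has_derivative (\<lambda>v. grad_pen c c' y \<bullet> v)) (at y)"
proof -
  have "((\<lambda>y. (c y \<bullet> c y) / 2) has_derivative (\<lambda>v. (c y \<bullet> c' y v + c' y v \<bullet> c y) / 2)) (at y)"
    using c_deriv by (auto intro!: derivative_eq_intros)
  moreover have "(\<lambda>v. (c y \<bullet> c' y v + c' y v \<bullet> c y) / 2) = (\<lambda>v. grad_pen c c' y \<bullet> v)"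
    by (auto simp: fun_eq_iff grad_pen_def adjoint_works[OF linear_c'] inner_commute)
  ultimately show ?thesis by (simp add: power2_norm_eq_inner)
qed

end

section \<open>One step of the deterministic descent\<close>

lemma neg_inner_le_young:
  fixes e d :: "'a::real_inner"
  assumes "\<mu> > 0"
  shows "- (e \<bullet> d) \<le> 2 * \<mu> * (norm e)\<^sup>2 + (norm d)\<^sup>2 / (8 * \<mu>)"
proof -
  have "- (e \<bullet> d) \<le> norm e * norm d" using Cauchy_Schwarz_ineq2[of e d] by linarith
  moreover have "0 \<le> (4 * \<mu> * norm e - norm d)\<^sup>2 / (8 * \<mu>)" using assms by simp
  moreover have "(4 * \<mu> * norm e - norm d)\<^sup>2 / (8 * \<mu>)
      = 2 * \<mu> * (norm e)\<^sup>2 - norm e * norm d + (norm d)\<^sup>2 / (8 * \<mu>)"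
    using assms by (simp add: field_simps power2_eq_square)
  ultimately show ?thesis by linarith
qed

text \<open>The proximal-gradient step on \<open>Q + h + \<parallel>\<cdot> - z\<parallel>\<^sup>2/(2\<mu>)\<close>: the prox optimality condition
  supplies a subgradient of \<open>h\<close>, and the gradient error \<open>D - \<nabla>Q x\<close> is absorbed by Young's
  inequality at the price of a quarter of the quadratic decrease.\<close>

lemma prox_gradient_step_descent:
  fixes Q :: "'a::euclidean_space \<Rightarrow> real" and h :: "'a \<Rightarrow> ereal" and z D :: 'a
  assumes h_pcc: "proper_closed_convex h" and mu: "\<mu> > 0" and muL: "\<mu> * L \<le> 1/4"
    and hx: "h x = ereal a"
    and descent: "\<And>y. Q y \<le> Q x + gx \<bullet> (y - x) + L / 2 * (norm (y - x))\<^sup>2"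
  defines "x' \<equiv> prox \<mu> h (z - \<mu> *\<^sub>R D)"
  shows "Q x' + real_of_ereal (h x') + (norm (x' - z))\<^sup>2 / (2 * \<mu>) + (norm (x' - x))\<^sup>2 / (4 * \<mu>)
     \<le> Q x + a + (norm (x - z))\<^sup>2 / (2 * \<mu>) + 2 * \<mu> * (norm (D - gx))\<^sup>2"
proof -
  obtain a' where ha': "h x' = ereal a'"
    using prox_value_finite[OF h_pcc mu, of "z - \<mu> *\<^sub>R D"] unfolding x'_def by (cases "h x'") auto
  define vh where "vh = (1 / \<mu>) *\<^sub>R (z - \<mu> *\<^sub>R D - x')"
  have "a' + vh \<bullet> (x - x') \<le> a"
    using subgradient_ineq[OF prox_subgradient[OF h_pcc mu, of "z - \<mu> *\<^sub>R D"], of a' x a] ha' hx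
    unfolding vh_def x'_def by simp
  moreover have "gx \<bullet> (x' - x) + vh \<bullet> (x' - x) + (norm (x' - z))\<^sup>2 / (2 * \<mu>) - (norm (x - z))\<^sup>2 / (2 * \<mu>)
      = - ((D - gx) \<bullet> (x' - x)) - (norm (x' - x))\<^sup>2 / (2 * \<mu>)"
    using mu unfolding vh_def power2_norm_eq_inner
    by (simp only: inner_diff_left inner_diff_right inner_add_left inner_add_right
        inner_scaleR_left inner_scaleR_right) (simp only: inner_commute, simp add: field_simps)
  moreover have "vh \<bullet> (x - x') = - (vh \<bullet> (x' - x))"
    by (metis inner_minus_right minus_diff_eq)
  moreover have "L / 2 * (norm (x' - x))\<^sup>2 \<le> (norm (x' - x))\<^sup>2 / (8 * \<mu>)"
  proof -
    have "L \<le> 1 / (4 * \<mu>)" using muL mu by (simp add: field_simps)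
    hence "L / 2 * (norm (x' - x))\<^sup>2 \<le> (1 / (4 * \<mu>)) / 2 * (norm (x' - x))\<^sup>2"
      by (intro mult_right_mono divide_right_mono) auto
    thus ?thesis by (simp add: field_simps)
  qed
  moreover have "(norm (x' - x))\<^sup>2 / (4 * \<mu>) = 2 * ((norm (x' - x))\<^sup>2 / (8 * \<mu>))"
    "(norm (x' - x))\<^sup>2 / (2 * \<mu>) = 4 * ((norm (x' - x))\<^sup>2 / (8 * \<mu>))"
    by (simp_all add: field_simps)
  moreover have "real_of_ereal (h x') = a'" using ha' by simp
  ultimately show ?thesis
    using descent[of x'] neg_inner_le_young[OF mu, of "D - gx" "x' - x"] by linarith
qed

text \<open>The relaxed step \<open>z' = z - \<beta> (prox z - x')\<close> trades the tangent-plane bound of the Moreau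
  envelope against the exact change of \<open>\<parallel>x' - \<cdot>\<parallel>\<^sup>2\<close>; the residue is \<open>(\<beta> - \<beta>\<^sup>2/2)/\<mu> \<ge> \<beta>/(2\<mu>)\<close>.\<close>

lemma moreau_relaxation_step:
  fixes g :: "'a::euclidean_space \<Rightarrow> real" and x' z :: 'a
  assumes g_pcc: "proper_closed_convex (\<lambda>y. ereal (g y))" and mu: "\<mu> > 0"
    and beta: "0 < \<beta>" "\<beta> \<le> 1"
  defines "p \<equiv> prox \<mu> (\<lambda>y. ereal (g y)) z"
  defines "z' \<equiv> z - \<beta> *\<^sub>R (p - x')"
  shows "(norm (x' - z'))\<^sup>2 / (2 * \<mu>) - moreau \<mu> g z' + \<beta> / (2 * \<mu>) * (norm (x' - p))\<^sup>2
     \<le> (norm (x' - z))\<^sup>2 / (2 * \<mu>) - moreau \<mu> g z"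
proof -
  have "(norm (x' - z'))\<^sup>2 / (2 * \<mu>) - (norm (x' - z))\<^sup>2 / (2 * \<mu>) - ((1 / \<mu>) *\<^sub>R (z - p)) \<bullet> (z' - z)
      = - (((\<beta> - \<beta>\<^sup>2 / 2) / \<mu>) * (norm (x' - p))\<^sup>2)"
    using mu unfolding z'_def power2_norm_eq_inner
    by (simp only: inner_diff_left inner_diff_right inner_add_left inner_add_right
        inner_scaleR_left inner_scaleR_right) (simp only: inner_commute, simp add: field_simps power2_eq_square)
  moreover have "\<beta> / (2 * \<mu>) * (norm (x' - p))\<^sup>2 \<le> ((\<beta> - \<beta>\<^sup>2 / 2) / \<mu>) * (norm (x' - p))\<^sup>2"
  proof -
    have "\<beta>\<^sup>2 \<le> \<beta>" using beta by (simp add: power2_eq_square mult_le_cancel_right1)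
    hence "\<beta> / (2 * \<mu>) \<le> (\<beta> - \<beta>\<^sup>2 / 2) / \<mu>" using mu by (simp add: field_simps)
    thus ?thesis by (intro mult_right_mono) auto
  qed
  moreover have "moreau \<mu> g z + ((1 / \<mu>) *\<^sub>R (z - p)) \<bullet> (z' - z) \<le> moreau \<mu> g z'"
    unfolding p_def by (rule moreau_tangent_le[OF g_pcc mu])
  ultimately show ?thesis by linarith
qed

section \<open>Second moments and fresh samples\<close>

lemma power2_norm_add_le:
  fixes u v :: "'a::real_normed_vector"
  shows "(norm (u + v))\<^sup>2 \<le> 2 * (norm u)\<^sup>2 + 2 * (norm v)\<^sup>2"
proof -
  have "(norm (u + v))\<^sup>2 \<le> (norm u + norm v)\<^sup>2" by (simp add: norm_triangle_ineq power_mono)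
  also have "\<dots> \<le> 2 * (norm u)\<^sup>2 + 2 * (norm v)\<^sup>2"
    using sum_squares_bound[of "norm u" "norm v"] by (simp add: power2_sum)
  finally show ?thesis .
qed

lemma power2_norm_add3_le:
  fixes a b w :: "'a::real_normed_vector"
  shows "(norm (a + b + w))\<^sup>2 \<le> 3 * ((norm a)\<^sup>2 + (norm b)\<^sup>2 + (norm w)\<^sup>2)"
proof -
  have "norm (a + b + w) \<le> norm a + norm b + norm w"
    by (meson norm_triangle_le norm_triangle_ineq add_mono order_refl)
  hence "(norm (a + b + w))\<^sup>2 \<le> (norm a + norm b + norm w)\<^sup>2" by (simp add: power_mono)
  also have "\<dots> \<le> 3 * ((norm a)\<^sup>2 + (norm b)\<^sup>2 + (norm w)\<^sup>2)"
    using sum_squares_bound[of "norm a" "norm b"] sum_squares_bound[of "norm a" "norm w"]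
      sum_squares_bound[of "norm b" "norm w"]
    by (simp add: power2_eq_square algebra_simps)
  finally show ?thesis .
qed

lemma integrable_norm_sq_of_nn_integral_le:
  fixes F :: "'c \<Rightarrow> 'a::euclidean_space"
  assumes Fm: "F \<in> borel_measurable M"
    and bound: "(\<integral>\<^sup>+\<xi>. ennreal ((norm (F \<xi>))\<^sup>2) \<partial>M) \<le> ennreal B" and B: "B \<ge> 0"
  shows "integrable M (\<lambda>\<xi>. (norm (F \<xi>))\<^sup>2)" and "(\<integral>\<xi>. (norm (F \<xi>))\<^sup>2 \<partial>M) \<le> B"
proof -
  show I: "integrable M (\<lambda>\<xi>. (norm (F \<xi>))\<^sup>2)"
    by (rule integrableI_nonneg)
       (use Fm bound in \<open>auto simp: less_top[symmetric] top_unique intro: le_less_trans[OF _ ennreal_less_top]\<close>)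
  have "ennreal (\<integral>\<xi>. (norm (F \<xi>))\<^sup>2 \<partial>M) = (\<integral>\<^sup>+\<xi>. ennreal ((norm (F \<xi>))\<^sup>2) \<partial>M)"
    by (rule nn_integral_eq_integral[OF I, symmetric]) auto
  with bound have "ennreal (\<integral>\<xi>. (norm (F \<xi>))\<^sup>2 \<partial>M) \<le> ennreal B" by simp
  thus "(\<integral>\<xi>. (norm (F \<xi>))\<^sup>2 \<partial>M) \<le> B" using ennreal_le_iff[OF B] by blast
qed

context prob_space
begin

lemma integral_power2_norm_add_centered:
  fixes N :: "'a \<Rightarrow> 'b::euclidean_space"
  assumes N: "integrable M N" "expectation N = 0" and N2: "integrable M (\<lambda>\<xi>. (norm (N \<xi>))\<^sup>2)"
  shows "integrable M (\<lambda>\<xi>. (norm (a + N \<xi>))\<^sup>2)"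
    and "(\<integral>\<xi>. (norm (a + N \<xi>))\<^sup>2 \<partial>M) = (norm a)\<^sup>2 + (\<integral>\<xi>. (norm (N \<xi>))\<^sup>2 \<partial>M)"
proof -
  have eq: "(norm (a + N \<xi>))\<^sup>2 = (norm a)\<^sup>2 + 2 * (a \<bullet> N \<xi>) + (norm (N \<xi>))\<^sup>2" for \<xi>
    unfolding power2_norm_eq_inner by (simp add: inner_add_left inner_add_right inner_commute)
  have aN: "integrable M (\<lambda>\<xi>. a \<bullet> N \<xi>)" using N by auto
  show "integrable M (\<lambda>\<xi>. (norm (a + N \<xi>))\<^sup>2)" unfolding eq using aN N2 by auto
  show "(\<integral>\<xi>. (norm (a + N \<xi>))\<^sup>2 \<partial>M) = (norm a)\<^sup>2 + (\<integral>\<xi>. (norm (N \<xi>))\<^sup>2 \<partial>M)"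
    unfolding eq using aN N2 N by (simp add: prob_space)
qed

lemma integral_power2_norm_centered_le:
  fixes V :: "'a \<Rightarrow> 'b::euclidean_space"
  assumes V: "integrable M V" and V2: "integrable M (\<lambda>\<xi>. (norm (V \<xi>))\<^sup>2)"
  shows "integrable M (\<lambda>\<xi>. (norm (V \<xi> - expectation V))\<^sup>2)"
    and "(\<integral>\<xi>. (norm (V \<xi> - expectation V))\<^sup>2 \<partial>M) \<le> (\<integral>\<xi>. (norm (V \<xi>))\<^sup>2 \<partial>M)"
proof -
  define m where "m = expectation V"
  have eq: "(norm (V \<xi> - m))\<^sup>2 = (norm (V \<xi>))\<^sup>2 - 2 * (V \<xi> \<bullet> m) + (norm m)\<^sup>2" for \<xi>
    unfolding power2_norm_eq_inner by (simp add: inner_diff_left inner_diff_right inner_commute)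
  have Vm: "integrable M (\<lambda>\<xi>. V \<xi> \<bullet> m)" using V by auto
  show "integrable M (\<lambda>\<xi>. (norm (V \<xi> - expectation V))\<^sup>2)"
    unfolding m_def[symmetric] eq using V2 Vm by auto
  have "(\<integral>\<xi>. (norm (V \<xi> - m))\<^sup>2 \<partial>M) = (\<integral>\<xi>. (norm (V \<xi>))\<^sup>2 \<partial>M) - (norm m)\<^sup>2"
    unfolding eq using V2 Vm V
    by (simp add: Bochner_Integration.integral_diff prob_space m_def power2_norm_eq_inner)
  thus "(\<integral>\<xi>. (norm (V \<xi> - expectation V))\<^sup>2 \<partial>M) \<le> (\<integral>\<xi>. (norm (V \<xi>))\<^sup>2 \<partial>M)"
    unfolding m_def by simp
qed

lemma integral_power2_norm_convex_comb_le:
  fixes Y W :: "'a \<Rightarrow> 'b::euclidean_space"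
  assumes meas: "Y \<in> borel_measurable M" "W \<in> borel_measurable M"
    and Y2: "integrable M (\<lambda>\<xi>. (norm (Y \<xi>))\<^sup>2)" and W2: "integrable M (\<lambda>\<xi>. (norm (W \<xi>))\<^sup>2)"
    and al: "0 \<le> \<alpha>" "\<alpha> \<le> 1"
  shows "integrable M (\<lambda>\<xi>. (norm (\<alpha> *\<^sub>R Y \<xi> + (1 - \<alpha>) *\<^sub>R W \<xi>))\<^sup>2)"
    and "(\<integral>\<xi>. (norm (\<alpha> *\<^sub>R Y \<xi> + (1 - \<alpha>) *\<^sub>R W \<xi>))\<^sup>2 \<partial>M)
           \<le> 2 * \<alpha>\<^sup>2 * (\<integral>\<xi>. (norm (Y \<xi>))\<^sup>2 \<partial>M) + 2 * (\<integral>\<xi>. (norm (W \<xi>))\<^sup>2 \<partial>M)"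
proof -
  define B where "B \<xi> = 2 * \<alpha>\<^sup>2 * (norm (Y \<xi>))\<^sup>2 + 2 * (1 - \<alpha>)\<^sup>2 * (norm (W \<xi>))\<^sup>2" for \<xi>
  have IB: "integrable M B" unfolding B_def using Y2 W2 by auto
  have NB: "(norm (\<alpha> *\<^sub>R Y \<xi> + (1 - \<alpha>) *\<^sub>R W \<xi>))\<^sup>2 \<le> B \<xi>" for \<xi>
    using power2_norm_add_le[of "\<alpha> *\<^sub>R Y \<xi>" "(1 - \<alpha>) *\<^sub>R W \<xi>"] unfolding B_def
    by (simp add: power_mult_distrib)
  show N2: "integrable M (\<lambda>\<xi>. (norm (\<alpha> *\<^sub>R Y \<xi> + (1 - \<alpha>) *\<^sub>R W \<xi>))\<^sup>2)"
    by (rule Bochner_Integration.integrable_bound[OF IB])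
       (use meas NB in \<open>auto intro!: AE_I2 order_trans[OF _ abs_ge_self]\<close>)
  have "(\<integral>\<xi>. (norm (\<alpha> *\<^sub>R Y \<xi> + (1 - \<alpha>) *\<^sub>R W \<xi>))\<^sup>2 \<partial>M) \<le> (\<integral>\<xi>. B \<xi> \<partial>M)"
    by (rule integral_mono[OF N2 IB NB])
  also have "\<dots> = 2 * \<alpha>\<^sup>2 * (\<integral>\<xi>. (norm (Y \<xi>))\<^sup>2 \<partial>M) + 2 * (1 - \<alpha>)\<^sup>2 * (\<integral>\<xi>. (norm (W \<xi>))\<^sup>2 \<partial>M)"
    unfolding B_def using Y2 W2 by simp
  also have "\<dots> \<le> 2 * \<alpha>\<^sup>2 * (\<integral>\<xi>. (norm (Y \<xi>))\<^sup>2 \<partial>M) + 2 * 1 * (\<integral>\<xi>. (norm (W \<xi>))\<^sup>2 \<partial>M)"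
    using al by (intro add_mono mult_left_mono mult_right_mono) (auto simp: power_le_one integral_nonneg_AE)
  finally show "(\<integral>\<xi>. (norm (\<alpha> *\<^sub>R Y \<xi> + (1 - \<alpha>) *\<^sub>R W \<xi>))\<^sup>2 \<partial>M)
      \<le> 2 * \<alpha>\<^sup>2 * (\<integral>\<xi>. (norm (Y \<xi>))\<^sup>2 \<partial>M) + 2 * (\<integral>\<xi>. (norm (W \<xi>))\<^sup>2 \<partial>M)" by simp
qed

end

text \<open>One step of the momentum (STORM) estimator: its new error is the damped old error \<open>a\<close> plus
  a centred noise, so the cross term vanishes in expectation.\<close>

lemma momentum_error_second_moment:
  fixes gf :: "'a::euclidean_space \<Rightarrow> 'c \<Rightarrow> 'a" and gradf :: "'a \<Rightarrow> 'a"
  assumes P: "prob_space Xi" and gm: "\<And>y. gf y \<in> borel_measurable Xi"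
    and unbiased: "\<forall>y. integrable Xi (gf y) \<and> (\<integral>\<xi>. gf y \<xi> \<partial>Xi) = gradf y"
    and var: "\<forall>y. (\<integral>\<^sup>+ \<xi>. ennreal ((norm (gf y \<xi> - gradf y))\<^sup>2) \<partial>Xi) \<le> ennreal (\<sigma>\<^sup>2)"
    and lip: "\<forall>y y'. (\<integral>\<^sup>+ \<xi>. ennreal ((norm (gf y \<xi> - gf y' \<xi>))\<^sup>2) \<partial>Xi) \<le> ennreal (Lf\<^sup>2 * (norm (y - y'))\<^sup>2)"
    and al: "0 \<le> \<alpha>" "\<alpha> \<le> 1"
  shows "(\<integral>\<^sup>+\<xi>. ennreal ((norm (a + ((gf x' \<xi> - gradf x') - (1 - \<alpha>) *\<^sub>R (gf x \<xi> - gradf x))))\<^sup>2) \<partial>Xi)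
     \<le> ennreal ((norm a)\<^sup>2 + 2 * \<alpha>\<^sup>2 * \<sigma>\<^sup>2 + 2 * Lf\<^sup>2 * (norm (x' - x))\<^sup>2)"
proof -
  interpret prob_space Xi by (rule P)
  define Y where "Y \<xi> = gf x' \<xi> - gradf x'" for \<xi>
  define V where "V \<xi> = gf x' \<xi> - gf x \<xi>" for \<xi>
  define W where "W \<xi> = V \<xi> - expectation V" for \<xi>
  define N where "N \<xi> = \<alpha> *\<^sub>R Y \<xi> + (1 - \<alpha>) *\<^sub>R W \<xi>" for \<xi>
  have int_gf: "integrable Xi (gf y)" for y using unbiased by blast
  have IY: "integrable Xi Y" and IV: "integrable Xi V" and IW: "integrable Xi W"
    unfolding Y_def V_def W_def using int_gf by auto
  have EV: "expectation V = gradf x' - gradf x"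
    unfolding V_def using int_gf unbiased by (simp add: Bochner_Integration.integral_diff)
  have noise: "(gf x' \<xi> - gradf x') - (1 - \<alpha>) *\<^sub>R (gf x \<xi> - gradf x) = N \<xi>" for \<xi>
    unfolding N_def Y_def W_def V_def EV by (simp add: algebra_simps)
  have EN: "expectation N = 0"
    unfolding N_def W_def Y_def using IY IV int_gf unbiased
    by (simp add: Bochner_Integration.integral_diff prob_space)
  have Y2: "integrable Xi (\<lambda>\<xi>. (norm (Y \<xi>))\<^sup>2)" "(\<integral>\<xi>. (norm (Y \<xi>))\<^sup>2 \<partial>Xi) \<le> \<sigma>\<^sup>2"
    using integrable_norm_sq_of_nn_integral_le[of Y Xi "\<sigma>\<^sup>2"] var gm unfolding Y_def by auto
  have V2: "integrable Xi (\<lambda>\<xi>. (norm (V \<xi>))\<^sup>2)" "(\<integral>\<xi>. (norm (V \<xi>))\<^sup>2 \<partial>Xi) \<le> Lf\<^sup>2 * (norm (x' - x))\<^sup>2"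
    using integrable_norm_sq_of_nn_integral_le[of V Xi "Lf\<^sup>2 * (norm (x' - x))\<^sup>2"] lip gm
    unfolding V_def by auto
  note W2 = integral_power2_norm_centered_le[OF IV V2(1), folded W_def]
  have meas: "Y \<in> borel_measurable Xi" "W \<in> borel_measurable Xi"
    unfolding Y_def W_def V_def using gm by auto
  note N2 = integral_power2_norm_convex_comb_le[OF meas Y2(1) W2(1) al, folded N_def]
  have "(\<integral>\<xi>. (norm (N \<xi>))\<^sup>2 \<partial>Xi) \<le> 2 * \<alpha>\<^sup>2 * \<sigma>\<^sup>2 + 2 * (Lf\<^sup>2 * (norm (x' - x))\<^sup>2)"
    using N2(2) Y2(2) W2(2) V2(2) mult_left_mono[OF Y2(2), of "2 * \<alpha>\<^sup>2"] by simp
  hence le: "(\<integral>\<xi>. (norm (a + N \<xi>))\<^sup>2 \<partial>Xi) \<le> (norm a)\<^sup>2 + 2 * \<alpha>\<^sup>2 * \<sigma>\<^sup>2 + 2 * Lf\<^sup>2 * (norm (x' - x))\<^sup>2"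
    using integral_power2_norm_add_centered(2)[OF _ EN N2(1)] IY IW by (simp add: N_def)
  have "(\<integral>\<^sup>+\<xi>. ennreal ((norm (a + N \<xi>))\<^sup>2) \<partial>Xi) = ennreal (\<integral>\<xi>. (norm (a + N \<xi>))\<^sup>2 \<partial>Xi)"
    using integral_power2_norm_add_centered(1)[OF _ EN N2(1)] IY IW
    by (intro nn_integral_eq_integral) (auto simp: N_def)
  also have "\<dots> \<le> ennreal ((norm a)\<^sup>2 + 2 * \<alpha>\<^sup>2 * \<sigma>\<^sup>2 + 2 * Lf\<^sup>2 * (norm (x' - x))\<^sup>2)"
    using le by (rule ennreal_leI)
  finally show ?thesis unfolding noise .
qed

lemma nn_integral_PiM_fresh_coordinate:
  fixes Xi :: "'c measure" and G :: "(nat \<Rightarrow> 'c) \<times> 'c \<Rightarrow> ennreal"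
  assumes P: "prob_space Xi"
    and Gm: "G \<in> borel_measurable (PiM UNIV (\<lambda>_. Xi) \<Otimes>\<^sub>M Xi)"
    and dep: "\<And>\<omega> \<omega>' \<xi>. (\<And>j. j < n \<Longrightarrow> \<omega> j = \<omega>' j) \<Longrightarrow> G (\<omega>, \<xi>) = G (\<omega>', \<xi>)"
  shows "(\<integral>\<^sup>+\<omega>. G (\<omega>, \<omega> n) \<partial>PiM UNIV (\<lambda>_. Xi))
       = (\<integral>\<^sup>+\<omega>. (\<integral>\<^sup>+\<xi>. G (\<omega>, \<xi>) \<partial>Xi) \<partial>PiM UNIV (\<lambda>_. Xi))"
proof -
  interpret S: sequence_space Xi
    using P unfolding sequence_space_def product_prob_space_def product_prob_space_axioms_def
      product_sigma_finite_def by (auto intro: prob_space_imp_sigma_finite)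
  let ?S = "PiM UNIV (\<lambda>_::nat. Xi)"
  have m1: "(\<lambda>\<omega>. G (\<omega>, \<omega> n)) \<in> borel_measurable ?S" using Gm by measurable
  have "(\<integral>\<^sup>+\<omega>. G (\<omega>, \<omega> n) \<partial>?S)
      = (\<integral>\<^sup>+\<omega>. G (\<omega>, \<omega> n) \<partial>distr (?S \<Otimes>\<^sub>M ?S) ?S (\<lambda>(\<omega>, \<omega>'). comb_seq n \<omega> \<omega>'))"
    using S.PiM_comb_seq[of n] by simp
  also have "\<dots> = (\<integral>\<^sup>+p. G (comb_seq n (fst p) (snd p), comb_seq n (fst p) (snd p) n) \<partial>(?S \<Otimes>\<^sub>M ?S))"
    using m1 by (subst nn_integral_distr[OF measurable_comb_seq]) (simp_all add: split_beta)
  also have "\<dots> = (\<integral>\<^sup>+p. G (fst p, snd p 0) \<partial>(?S \<Otimes>\<^sub>M ?S))"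
  proof (rule nn_integral_cong)
    fix p :: "(nat \<Rightarrow> 'c) \<times> (nat \<Rightarrow> 'c)"
    have "comb_seq n (fst p) (snd p) n = snd p 0" using comb_seq_add[of n "fst p" "snd p" 0] by simp
    moreover have "G (comb_seq n (fst p) (snd p), \<xi>) = G (fst p, \<xi>)" for \<xi>
      by (rule dep) (simp add: comb_seq_less)
    ultimately show "G (comb_seq n (fst p) (snd p), comb_seq n (fst p) (snd p) n) = G (fst p, snd p 0)"
      by simp
  qed
  also have "\<dots> = (\<integral>\<^sup>+\<omega>. (\<integral>\<^sup>+\<omega>'. G (\<omega>, \<omega>' 0) \<partial>?S) \<partial>?S)"
  proof -
    have "(\<lambda>p. G (fst p, snd p 0)) \<in> borel_measurable (?S \<Otimes>\<^sub>M ?S)" using Gm by measurable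
    from S.nn_integral_fst[OF this] show ?thesis by simp
  qed
  also have "\<dots> = (\<integral>\<^sup>+\<omega>. (\<integral>\<^sup>+\<xi>. G (\<omega>, \<xi>) \<partial>Xi) \<partial>?S)"
  proof (rule nn_integral_cong)
    fix \<omega> assume \<omega>: "\<omega> \<in> space ?S"
    have "(\<lambda>\<xi>. G (\<omega>, \<xi>)) \<in> borel_measurable Xi" using Gm \<omega> by measurable
    hence "(\<integral>\<^sup>+\<omega>'. G (\<omega>, \<omega>' 0) \<partial>?S) = (\<integral>\<^sup>+\<xi>. G (\<omega>, \<xi>) \<partial>distr ?S Xi (\<lambda>\<omega>'. \<omega>' 0))"
      by (subst nn_integral_distr) auto
    also have "distr ?S Xi (\<lambda>\<omega>'. \<omega>' 0) = Xi" by (rule distr_PiM_component) (auto intro: P)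
    finally show "(\<integral>\<^sup>+\<omega>'. G (\<omega>, \<omega>' 0) \<partial>?S) = (\<integral>\<^sup>+\<xi>. G (\<omega>, \<xi>) \<partial>Xi)" .
  qed
  finally show ?thesis .
qed

lemma nn_integral_pair_uniform_count_measure:
  fixes F :: "nat \<Rightarrow> 'w \<Rightarrow> ennreal" and M :: "'w measure"
  assumes Fm: "\<And>r. F r \<in> borel_measurable M" and K: "K \<ge> 1"
  shows "(\<integral>\<^sup>+(\<omega>, r). F r \<omega> \<partial>(M \<Otimes>\<^sub>M uniform_count_measure {..<K}))
       = ennreal (1 / real K) * (\<Sum>r<K. \<integral>\<^sup>+\<omega>. F r \<omega> \<partial>M)"
proof -
  let ?U = "uniform_count_measure {..<K::nat}"
  have "0 \<in> {..<K}" using K by simp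
  then interpret U: prob_space ?U by (intro prob_space_uniform_count_measure) auto
  have "snd \<in> measurable (M \<Otimes>\<^sub>M ?U) (count_space {..<K})"
    using measurable_snd[of M ?U] by (simp cong: measurable_cong_sets add: sets_uniform_count_measure_count_space)
  hence meas: "(\<lambda>p. F (snd p) (fst p)) \<in> borel_measurable (M \<Otimes>\<^sub>M ?U)"
    by (rule measurable_compose_countable'[rotated]) (use Fm in auto)
  have "(\<integral>\<^sup>+(\<omega>, r). F r \<omega> \<partial>(M \<Otimes>\<^sub>M ?U)) = (\<integral>\<^sup>+\<omega>. (\<integral>\<^sup>+r. F r \<omega> \<partial>?U) \<partial>M)"
    using U.nn_integral_fst[OF meas] by (simp add: split_beta')
  also have "\<dots> = (\<integral>\<^sup>+\<omega>. (\<Sum>r<K. ennreal (1 / real K) * F r \<omega>) \<partial>M)"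
    unfolding uniform_count_measure_def using K by (subst nn_integral_point_measure_finite) auto
  also have "\<dots> = ennreal (1 / real K) * (\<Sum>r<K. \<integral>\<^sup>+\<omega>. F r \<omega> \<partial>M)"
    using Fm by (subst nn_integral_sum) (auto simp: nn_integral_cmult sum_distrib_left)
  finally show ?thesis .
qed

lemma nn_integral_uniform_index:
  fixes F :: "nat \<Rightarrow> 'w \<Rightarrow> real"
  assumes int: "\<And>r. integrable M (F r)" and nonneg: "\<And>r \<omega>. F r \<omega> \<ge> 0" and K: "K \<ge> 1"
  shows "(\<integral>\<^sup>+(\<omega>, r). ennreal (F r \<omega>) \<partial>(M \<Otimes>\<^sub>M uniform_count_measure {..<K}))
       = ennreal ((\<Sum>r<K. \<integral>\<omega>. F r \<omega> \<partial>M) / real K)"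
proof -
  have "(\<integral>\<^sup>+(\<omega>, r). ennreal (F r \<omega>) \<partial>(M \<Otimes>\<^sub>M uniform_count_measure {..<K}))
      = ennreal (1 / real K) * (\<Sum>r<K. \<integral>\<^sup>+\<omega>. ennreal (F r \<omega>) \<partial>M)"
    using int by (intro nn_integral_pair_uniform_count_measure K) auto
  also have "(\<Sum>r<K. \<integral>\<^sup>+\<omega>. ennreal (F r \<omega>) \<partial>M) = (\<Sum>r<K. ennreal (\<integral>\<omega>. F r \<omega> \<partial>M))"
    using int nonneg by (intro sum.cong refl nn_integral_eq_integral) auto
  also have "\<dots> = ennreal (\<Sum>r<K. \<integral>\<omega>. F r \<omega> \<partial>M)"
    using nonneg by (simp add: sum_ennreal integral_nonneg_AE)
  finally show ?thesis
    using nonneg by (simp add: ennreal_mult'[symmetric] sum_nonneg integral_nonneg_AE)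
qed

lemma integrable_nonneg_le:
  fixes F H :: "'a \<Rightarrow> real"
  assumes "integrable M H" "F \<in> borel_measurable M" "\<And>\<omega>. 0 \<le> F \<omega>" "\<And>\<omega>. F \<omega> \<le> H \<omega>"
  shows "integrable M F"
  by (rule Bochner_Integration.integrable_bound[OF assms(1,2)])
     (use assms(3,4) in \<open>auto intro!: AE_I2 order_trans[OF _ abs_ge_self]\<close>)

lemma sum_le_of_telescoping:
  fixes \<Phi> a :: "nat \<Rightarrow> real"
  assumes step: "\<And>k. \<Phi> (Suc k) + a k \<le> \<Phi> k + c" and nonneg: "\<Phi> K \<ge> 0"
  shows "(\<Sum>k<K. a k) \<le> \<Phi> 0 + real K * c"
proof -
  have "\<Phi> K + (\<Sum>k<K. a k) \<le> \<Phi> 0 + real K * c"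
  proof (induction K)
    case (Suc K)
    thus ?case using step[of K] by (simp add: algebra_simps)
  qed simp
  thus ?thesis using nonneg by linarith
qed

section \<open>The constants of the rate\<close>

lemma rate_coefficients:
  fixes \<mu> \<beta> :: real
  assumes mu: "\<mu> > 0" and beta: "0 < \<beta>" "\<beta> \<le> 1"
  shows "6 / (\<mu> * \<beta>) \<le> 24 * (1/16 + 1/\<beta>\<^sup>2) / \<mu>"
    and "6 / (\<mu> * \<beta>) \<le> 24 * (1/16 + 1/\<beta>\<^sup>2 + (\<mu>/\<beta>)\<^sup>2 / 3) / \<mu>"
    and "2 * \<mu> / \<beta> \<le> 24 * (1/16 + 1/\<beta>\<^sup>2 + (\<mu>/\<beta>)\<^sup>2 / 3) / \<mu>"
proof -
  define A B where "A = 1/16 + 1/\<beta>\<^sup>2 + (\<mu>/\<beta>)\<^sup>2 / 3" and "B = 1/16 + 1/\<beta>\<^sup>2"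
  have inv_beta: "1 / \<beta> \<le> 1 / \<beta>\<^sup>2"
    using beta by (simp add: power2_eq_square divide_le_eq_1 field_simps)
  have "6 / \<beta> \<le> 24 * B"
  proof -
    have "6 / \<beta> = 6 * (1 / \<beta>)" by simp
    also have "\<dots> \<le> 6 * (1 / \<beta>\<^sup>2)" using inv_beta by simp
    also have "\<dots> \<le> 24 * B"
    proof -
      obtain q :: real where q: "1 / \<beta>\<^sup>2 = q" "q \<ge> 0" by simp
      thus ?thesis unfolding B_def q(1) by (simp add: distrib_left)
    qed
    finally show ?thesis .
  qed
  moreover have "B \<le> A" unfolding A_def B_def by simp
  ultimately have c6: "6 / \<beta> \<le> 24 * B" "6 / \<beta> \<le> 24 * A" by linarith+
  have "6 / (\<mu> * \<beta>) = 6 / \<beta> / \<mu>" by simp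
  thus "6 / (\<mu> * \<beta>) \<le> 24 * (1/16 + 1/\<beta>\<^sup>2) / \<mu>"
    and "6 / (\<mu> * \<beta>) \<le> 24 * (1/16 + 1/\<beta>\<^sup>2 + (\<mu>/\<beta>)\<^sup>2 / 3) / \<mu>"
    using divide_right_mono[OF c6(1), of \<mu>] divide_right_mono[OF c6(2), of \<mu>] mu
    by (simp_all add: mult.commute A_def B_def)
  show "2 * \<mu> / \<beta> \<le> 24 * (1/16 + 1/\<beta>\<^sup>2 + (\<mu>/\<beta>)\<^sup>2 / 3) / \<mu>"
  proof -
    have "2 * \<mu>\<^sup>2 * (1 / \<beta>) \<le> 8 * \<mu>\<^sup>2 * (1 / \<beta>\<^sup>2)"
      using inv_beta beta by (intro mult_mono) auto
    also have "\<dots> \<le> 24 * A" unfolding A_def by (simp add: power_divide)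
    finally show ?thesis using mu by (simp add: A_def field_simps power2_eq_square)
  qed
qed

lemma rate_constants:
  fixes \<mu> \<beta> \<alpha> Lf \<rho> G v0 e0 \<sigma> :: real and K :: nat
  assumes mu: "\<mu> > 0" and beta: "0 < \<beta>" "\<beta> \<le> 1" and al: "\<alpha> > 0" and K: "K \<ge> 1"
    and rho: "\<rho> > 0" and v0: "v0 \<ge> 0" and e0: "e0 \<ge> 0"
  defines "A \<equiv> 1/16 + 1/\<beta>\<^sup>2 + (\<mu>/\<beta>)\<^sup>2 / 3" and "B \<equiv> 1/16 + 1/\<beta>\<^sup>2"
  defines "S \<equiv> v0 + (2 * \<mu> / \<alpha>) * e0 + 4 * real K * \<mu> * \<alpha> * \<sigma>\<^sup>2"
    and "N \<equiv> e0 / \<alpha> + 2 * real K * \<alpha> * \<sigma>\<^sup>2"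
  defines "R1 \<equiv> (1 / real K) * ((96 + 768 * A) * \<mu> * Lf\<^sup>2 / \<alpha> + 24 * A / \<mu>) * v0
         + (48 * A + 6) / (\<alpha> * real K) * e0 + (96 * A + 12) * \<alpha> * \<sigma>\<^sup>2"
    and "R2 \<equiv> 2 / (\<rho>\<^sup>2 * real K) * ((144 + 768 / \<beta>\<^sup>2) * \<mu> * Lf\<^sup>2 / \<alpha> + 24 * B / \<mu>) * v0
         + (12 + 96 * B) / (\<alpha> * \<rho>\<^sup>2 * real K) * e0 + (24 + 192 * B) * \<alpha> * \<sigma>\<^sup>2 / \<rho>\<^sup>2 + 18 * G\<^sup>2 / \<rho>\<^sup>2"
  shows "(6 / (\<mu> * \<beta>) * S + 3 * N) / real K \<le> R1"
    and "(2 * \<mu> / \<beta>) * S / real K \<le> R1"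
    and "(2 * ((6 / (\<mu> * \<beta>) * S + 3 * N) / real K) + 18 * G\<^sup>2) / \<rho>\<^sup>2 \<le> R2"
proof -
  have Kp: "real K > 0" using K by simp
  have SN: "S \<ge> 0" "N \<ge> 0" unfolding S_def N_def using mu al v0 e0 by simp_all
  have Lf_terms: "(96 + 768 * A) * \<mu> * Lf\<^sup>2 / \<alpha> * v0 / real K \<ge> 0"
    "(144 + 768 / \<beta>\<^sup>2) * \<mu> * Lf\<^sup>2 / \<alpha> * v0 / real K \<ge> 0"
    unfolding A_def using mu al v0 by simp_all
  \<comment> \<open>The paper's constants regroup into multiples of the Lyapunov budget \<open>S\<close> and the noise \<open>N\<close>.\<close>
  have R1_eq: "R1 = (96 + 768 * A) * \<mu> * Lf\<^sup>2 / \<alpha> * v0 / real K + ((24 * A / \<mu>) * S + 6 * N) / real K"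
    unfolding R1_def S_def N_def using mu al Kp by (simp add: field_simps power2_eq_square)
  have R2_eq: "R2 = 2 / \<rho>\<^sup>2 * ((144 + 768 / \<beta>\<^sup>2) * \<mu> * Lf\<^sup>2 / \<alpha> * v0 / real K
      + ((24 * B / \<mu>) * S + 6 * N) / real K) + 18 * G\<^sup>2 / \<rho>\<^sup>2"
    unfolding R2_def B_def S_def N_def using mu al Kp rho by (simp add: field_simps power2_eq_square)
  note cB = rate_coefficients(1)[OF mu beta, folded B_def]
    and cA = rate_coefficients(2,3)[OF mu beta, folded A_def]
  have W_le: "6 / (\<mu> * \<beta>) * S + 3 * N \<le> (24 * A / \<mu>) * S + 6 * N"
    and W_le': "6 / (\<mu> * \<beta>) * S + 3 * N \<le> (24 * B / \<mu>) * S + 6 * N"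
    using mult_right_mono[OF cA(1) SN(1)] mult_right_mono[OF cB SN(1)] SN(2) by simp_all
  show "(6 / (\<mu> * \<beta>) * S + 3 * N) / real K \<le> R1"
    unfolding R1_eq using divide_right_mono[OF W_le, of "real K"] Lf_terms by simp
  have "(2 * \<mu> / \<beta>) * S / real K \<le> (24 * A / \<mu>) * S / real K"
    using divide_right_mono[OF mult_right_mono[OF cA(2) SN(1)], of "real K"] by simp
  also have "\<dots> \<le> ((24 * A / \<mu>) * S + 6 * N) / real K"
    using SN Kp by (intro divide_right_mono) auto
  also have "\<dots> \<le> R1" unfolding R1_eq using Lf_terms(1) by simp
  finally show "(2 * \<mu> / \<beta>) * S / real K \<le> R1" .
  have "2 * ((6 / (\<mu> * \<beta>) * S + 3 * N) / real K)
      \<le> 2 * ((144 + 768 / \<beta>\<^sup>2) * \<mu> * Lf\<^sup>2 / \<alpha> * v0 / real K + ((24 * B / \<mu>) * S + 6 * N) / real K)"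
  proof -
    have "2 * ((6 / (\<mu> * \<beta>) * S + 3 * N) / real K) \<le> 2 * (((24 * B / \<mu>) * S + 6 * N) / real K)"
      using divide_right_mono[OF W_le', of "real K"] by (intro mult_left_mono) auto
    also have "\<dots> \<le> 2 * ((144 + 768 / \<beta>\<^sup>2) * \<mu> * Lf\<^sup>2 / \<alpha> * v0 / real K
        + ((24 * B / \<mu>) * S + 6 * N) / real K)"
      using Lf_terms(2) by (intro mult_left_mono) auto
    finally show ?thesis .
  qed
  hence "(2 * ((6 / (\<mu> * \<beta>) * S + 3 * N) / real K) + 18 * G\<^sup>2) / \<rho>\<^sup>2
      \<le> (2 * ((144 + 768 / \<beta>\<^sup>2) * \<mu> * Lf\<^sup>2 / \<alpha> * v0 / real K
        + ((24 * B / \<mu>) * S + 6 * N) / real K) + 18 * G\<^sup>2) / \<rho>\<^sup>2"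
    by (intro divide_right_mono add_right_mono) auto
  also have "\<dots> = R2" unfolding R2_eq by (simp add: add_divide_distrib)
  finally show "(2 * ((6 / (\<mu> * \<beta>) * S + 3 * N) / real K) + 18 * G\<^sup>2) / \<rho>\<^sup>2 \<le> R2" .
qed

lemma ereal_affine_eq_infinity:
  fixes X :: ereal and E :: ennreal
  assumes "a > 0" "b > 0" "X \<noteq> -\<infinity>" "X = \<infinity> \<or> E = \<infinity>"
  shows "ereal a * X + ereal b * enn2ereal E + ereal c = \<infinity>"
proof -
  have "ereal b * enn2ereal E \<ge> 0" using assms(2) by simp
  with assms show ?thesis by (cases X) (auto simp: top_ennreal.rep_eq)
qed

section \<open>The MoSSP-R iteration\<close>

locale mossp_setting = bounded_constraint c c' G C Lc
  for f :: "'a::euclidean_space \<Rightarrow> real" and gradf :: "'a \<Rightarrow> 'a"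
    and gf :: "'a \<Rightarrow> 'c \<Rightarrow> 'a" and Xi :: "'c measure"
    and c :: "'a \<Rightarrow> 'b::euclidean_space" and c' :: "'a \<Rightarrow> 'a \<Rightarrow> 'b"
    and h :: "'a \<Rightarrow> ereal" and g :: "'a \<Rightarrow> real"
    and Lf Lc C G \<sigma> \<rho> \<rho>0 \<mu> \<alpha> \<beta> :: real and b0 :: nat and x0 :: 'a +
  assumes prob: "prob_space Xi"
    and f_deriv: "\<forall>y. (f has_derivative (\<lambda>v. gradf y \<bullet> v)) (at y)"
    and h_pcc: "proper_closed_convex h"
    and g_pcc: "proper_closed_convex (\<lambda>y. ereal (g y))"
    and f_smooth: "\<forall>y y'. norm (gradf y - gradf y') \<le> Lf * norm (y - y')"
    and gradf_bd: "\<forall>y. norm (gradf y) \<le> G"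
    and h_sub_bd: "\<forall>y v. is_subgradient h y v \<longrightarrow> norm v \<le> G"
    and g_sub_bd: "\<forall>y v. is_subgradient (\<lambda>y. ereal (g y)) y v \<longrightarrow> norm v \<le> G"
    and gf_meas: "(\<lambda>(y, \<xi>). gf y \<xi>) \<in> borel_measurable (borel \<Otimes>\<^sub>M Xi)"
    and A2_unbiased: "\<forall>y. integrable Xi (gf y) \<and> (\<integral>\<xi>. gf y \<xi> \<partial>Xi) = gradf y"
    and A2_var: "\<forall>y. (\<integral>\<^sup>+ \<xi>. ennreal ((norm (gf y \<xi> - gradf y))\<^sup>2) \<partial>Xi) \<le> ennreal (\<sigma>\<^sup>2)"
    and A4_lip: "\<forall>y y'. (\<integral>\<^sup>+ \<xi>. ennreal ((norm (gf y \<xi> - gf y' \<xi>))\<^sup>2) \<partial>Xi)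
                        \<le> ennreal (Lf\<^sup>2 * (norm (y - y'))\<^sup>2)"
    and rho0_pos: "\<rho>0 > 0" and rho0_le: "\<rho>0 \<le> \<rho>"
    and mu_pos: "\<mu> > 0"
    and step: "\<mu> * (\<rho> * (Lf / \<rho>0 + G\<^sup>2 + C * Lc)) \<le> 1/4"
    and alpha_lb: "0 < 32 * \<mu>\<^sup>2 * Lf\<^sup>2" "32 * \<mu>\<^sup>2 * Lf\<^sup>2 \<le> \<alpha>" and alpha_ub: "\<alpha> \<le> 1"
    and beta: "0 < \<beta>" "\<beta> \<le> 1"
begin

text \<open>\<open>Est\<close>, \<open>Dir\<close>, \<open>Err\<close> are the paper's \<open>d\<^sup>k\<close>, \<open>D\<^sup>k\<close>, \<open>e\<^sup>k\<close>, and \<open>U \<omega> k\<close> is \<open>u\<^sup>k\<^sup>+\<^sup>1\<close>;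
  the sample \<open>\<xi>\<^sup>k\<^sup>+\<^sup>1\<close> is \<open>\<omega> (b0 + k)\<close>.\<close>

definition "iter \<omega> k = mossp gf c c' h g \<rho> \<mu> \<alpha> \<beta> b0 x0 \<omega> k"
definition "X \<omega> k = fst (iter \<omega> k)"
definition "Z \<omega> k = fst (snd (iter \<omega> k))"
definition "Est \<omega> k = snd (snd (iter \<omega> k))"
definition "gradQ y = gradf y + \<rho> *\<^sub>R grad_pen c c' y"
definition "proxg z = prox \<mu> (\<lambda>y. ereal (g y)) z"
definition "proxh w = prox \<mu> h w"
definition "Dir \<omega> k = Est \<omega> k + \<rho> *\<^sub>R grad_pen c c' (X \<omega> k)"
definition "Err \<omega> k = Dir \<omega> k - gradQ (X \<omega> k)"
definition "U \<omega> k = gradQ (X \<omega> (Suc k)) - Dir \<omega> k + (1 / \<mu>) *\<^sub>R (proxg (Z \<omega> k) - X \<omega> (Suc k))"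
definition "StepSq \<omega> k = (norm (X \<omega> (Suc k) - X \<omega> k))\<^sup>2"
definition "ProxSq \<omega> k = (norm (X \<omega> (Suc k) - proxg (Z \<omega> k)))\<^sup>2"
definition "ErrSq \<omega> k = (norm (Err \<omega> k))\<^sup>2"

lemma iter_Suc: "iter \<omega> (Suc k) = (proxh (Z \<omega> k - \<mu> *\<^sub>R Dir \<omega> k),
     Z \<omega> k - \<beta> *\<^sub>R (proxg (Z \<omega> k) - proxh (Z \<omega> k - \<mu> *\<^sub>R Dir \<omega> k)),
     gf (proxh (Z \<omega> k - \<mu> *\<^sub>R Dir \<omega> k)) (\<omega> (b0 + k))
       + (1 - \<alpha>) *\<^sub>R (Est \<omega> k - gf (X \<omega> k) (\<omega> (b0 + k))))"
  unfolding iter_def X_def Z_def Est_def Dir_def proxh_def proxg_def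
  by (simp add: Let_def split: prod.split)

lemma X_Suc: "X \<omega> (Suc k) = proxh (Z \<omega> k - \<mu> *\<^sub>R Dir \<omega> k)"
  by (simp add: X_def iter_Suc)

lemma Z_Suc: "Z \<omega> (Suc k) = Z \<omega> k - \<beta> *\<^sub>R (proxg (Z \<omega> k) - X \<omega> (Suc k))"
  by (simp add: Z_def iter_Suc X_Suc)

lemma Est_Suc: "Est \<omega> (Suc k)
    = gf (X \<omega> (Suc k)) (\<omega> (b0 + k)) + (1 - \<alpha>) *\<^sub>R (Est \<omega> k - gf (X \<omega> k) (\<omega> (b0 + k)))"
  by (simp add: Est_def iter_Suc X_Suc)

lemma X_0: "X \<omega> 0 = x0" and Z_0: "Z \<omega> 0 = x0"
  and Est_0: "Est \<omega> 0 = (1 / real b0) *\<^sub>R (\<Sum>j<b0. gf x0 (\<omega> j))"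
  by (simp_all add: X_def Z_def Est_def iter_def)

lemma Err_eq_Est: "Err \<omega> k = Est \<omega> k - gradf (X \<omega> k)"
  by (simp add: Err_def Dir_def gradQ_def)

lemma Err_Suc: "Err \<omega> (Suc k) = (1 - \<alpha>) *\<^sub>R Err \<omega> k
    + ((gf (X \<omega> (Suc k)) (\<omega> (b0 + k)) - gradf (X \<omega> (Suc k)))
       - (1 - \<alpha>) *\<^sub>R (gf (X \<omega> k) (\<omega> (b0 + k)) - gradf (X \<omega> k)))"
  unfolding Err_eq_Est Est_Suc by (simp add: algebra_simps)

lemma iter_cong: "(\<And>j. j < b0 + k \<Longrightarrow> \<omega> j = \<omega>' j) \<Longrightarrow> iter \<omega> k = iter \<omega>' k"
proof (induction k)
  case (Suc k)
  hence "iter \<omega> k = iter \<omega>' k" "\<omega> (b0 + k) = \<omega>' (b0 + k)" by auto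
  thus ?case unfolding iter_def by (simp add: Let_def split: prod.split)
qed (simp add: iter_def)

lemma rho_pos: "\<rho> > 0"
  using rho0_pos rho0_le by simp

lemma alpha_pos: "\<alpha> > 0"
  using alpha_lb by linarith

lemma Lf_nonneg: "Lf \<ge> 0"
proof -
  obtain b :: 'a where "norm b = 1" using vector_choose_size[of 1] by auto
  with f_smooth[rule_format, of 0 b] have "norm (gradf 0 - gradf b) \<le> Lf" by simp
  thus ?thesis using norm_ge_zero order_trans by blast
qed

definition "LQ = Lf + \<rho> * (G\<^sup>2 + C * Lc)"

lemma LQ_nonneg: "LQ \<ge> 0"
  unfolding LQ_def using Lf_nonneg rho_pos C_nonneg Lc_nonneg by simp

lemma gradQ_lipschitz: "norm (gradQ y - gradQ y') \<le> LQ * norm (y - y')"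
proof -
  have "norm (gradQ y - gradQ y')
      \<le> norm (gradf y - gradf y') + \<rho> * norm (grad_pen c c' y - grad_pen c c' y')"
  proof -
    have "gradQ y - gradQ y' = (gradf y - gradf y') + \<rho> *\<^sub>R (grad_pen c c' y - grad_pen c c' y')"
      by (simp add: gradQ_def algebra_simps)
    thus ?thesis
      using norm_triangle_ineq[of "gradf y - gradf y'" "\<rho> *\<^sub>R (grad_pen c c' y - grad_pen c c' y')"] rho_pos
      by (simp add: abs_of_pos)
  qed
  also have "\<dots> \<le> Lf * norm (y - y') + \<rho> * ((G\<^sup>2 + C * Lc) * norm (y - y'))"
    using f_smooth grad_pen_lipschitz rho_pos by (intro add_mono mult_left_mono) auto
  finally show ?thesis by (simp add: LQ_def algebra_simps)
qed

lemma mu_LQ_le: "\<mu> * LQ \<le> 1/4"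
proof -
  have "Lf \<le> \<rho> * (Lf / \<rho>0)"
    using mult_left_mono[OF rho0_le Lf_nonneg] rho0_pos by (simp add: field_simps)
  hence "\<mu> * LQ \<le> \<mu> * (\<rho> * (Lf / \<rho>0 + G\<^sup>2 + C * Lc))"
    using mu_pos unfolding LQ_def by (intro mult_left_mono) (auto simp: algebra_simps)
  thus ?thesis using step by linarith
qed

definition "Q y = f y + \<rho> * ((norm (c y))\<^sup>2 / 2)"

lemma has_derivative_Q: "(Q has_derivative (\<lambda>v. gradQ y \<bullet> v)) (at y)"
proof -
  have "(Q has_derivative (\<lambda>v. gradf y \<bullet> v + \<rho> * (grad_pen c c' y \<bullet> v))) (at y)"
    unfolding Q_def using f_deriv has_derivative_half_norm_c_sq
    by (intro has_derivative_add has_derivative_mult_right) auto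
  thus ?thesis by (simp add: gradQ_def inner_add_left)
qed

definition "Pot x z = Q x + real_of_ereal (h x) + (norm (x - z))\<^sup>2 / (2 * \<mu>) - moreau \<mu> g z"

lemma potential_descent:
  assumes "\<bar>h (X \<omega> k)\<bar> \<noteq> \<infinity>"
  shows "Pot (X \<omega> (Suc k)) (Z \<omega> (Suc k)) + StepSq \<omega> k / (4 * \<mu>) + \<beta> / (2 * \<mu>) * ProxSq \<omega> k
    \<le> Pot (X \<omega> k) (Z \<omega> k) + 2 * \<mu> * ErrSq \<omega> k"
proof -
  obtain a where a: "h (X \<omega> k) = ereal a" using assms by (cases "h (X \<omega> k)") auto
  have "Q (X \<omega> (Suc k)) + real_of_ereal (h (X \<omega> (Suc k))) + (norm (X \<omega> (Suc k) - Z \<omega> k))\<^sup>2 / (2 * \<mu>)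
      + (norm (X \<omega> (Suc k) - X \<omega> k))\<^sup>2 / (4 * \<mu>)
    \<le> Q (X \<omega> k) + a + (norm (X \<omega> k - Z \<omega> k))\<^sup>2 / (2 * \<mu>) + 2 * \<mu> * (norm (Err \<omega> k))\<^sup>2"
    using prox_gradient_step_descent[OF h_pcc mu_pos mu_LQ_le a
        descent_lemma[OF has_derivative_Q gradQ_lipschitz], of "Z \<omega> k" "Dir \<omega> k"]
    by (simp only: proxh_def[symmetric] X_Suc[symmetric] Err_def[symmetric])
  moreover have "(norm (X \<omega> (Suc k) - Z \<omega> (Suc k)))\<^sup>2 / (2 * \<mu>) - moreau \<mu> g (Z \<omega> (Suc k))
      + \<beta> / (2 * \<mu>) * (norm (X \<omega> (Suc k) - proxg (Z \<omega> k)))\<^sup>2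
    \<le> (norm (X \<omega> (Suc k) - Z \<omega> k))\<^sup>2 / (2 * \<mu>) - moreau \<mu> g (Z \<omega> k)"
    unfolding Z_Suc proxg_def by (rule moreau_relaxation_step[OF g_pcc mu_pos beta])
  moreover have "real_of_ereal (h (X \<omega> k)) = a" using a by simp
  ultimately show ?thesis unfolding Pot_def StepSq_def ProxSq_def ErrSq_def by linarith
qed

lemma norm_U_sq_le: "(norm (U \<omega> k))\<^sup>2 \<le> 3 * (LQ\<^sup>2 * StepSq \<omega> k + ErrSq \<omega> k + ProxSq \<omega> k / \<mu>\<^sup>2)"
proof -
  have "U \<omega> k = (gradQ (X \<omega> (Suc k)) - gradQ (X \<omega> k)) + (- Err \<omega> k)
      + (- (1 / \<mu>)) *\<^sub>R (X \<omega> (Suc k) - proxg (Z \<omega> k))"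
    by (simp add: U_def Err_def algebra_simps)
  moreover have "(norm (gradQ (X \<omega> (Suc k)) - gradQ (X \<omega> k)))\<^sup>2 \<le> (LQ * norm (X \<omega> (Suc k) - X \<omega> k))\<^sup>2"
    using gradQ_lipschitz by (simp add: power_mono)
  moreover have "(norm ((- (1 / \<mu>)) *\<^sub>R (X \<omega> (Suc k) - proxg (Z \<omega> k))))\<^sup>2
      = (norm (X \<omega> (Suc k) - proxg (Z \<omega> k)))\<^sup>2 / \<mu>\<^sup>2"
    using mu_pos by (simp add: power_divide power_mult_distrib)
  ultimately show ?thesis
    using power2_norm_add3_le[of "gradQ (X \<omega> (Suc k)) - gradQ (X \<omega> k)" "- Err \<omega> k"
        "(- (1 / \<mu>)) *\<^sub>R (X \<omega> (Suc k) - proxg (Z \<omega> k))"]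
    by (simp add: StepSq_def ErrSq_def ProxSq_def power_mult_distrib)
qed

text \<open>The optimality conditions of the two prox maps express \<open>\<rho> \<nabla>c c\<close> through \<open>u\<close>, \<open>\<nabla>f\<close> and
  subgradients of \<open>h\<close> and \<open>g\<close>, all three bounded by \<open>G\<close>.\<close>

lemma rho_sq_norm_grad_pen_le:
  "\<rho>\<^sup>2 * (norm (grad_pen c c' (X \<omega> (Suc k))))\<^sup>2 \<le> 2 * (norm (U \<omega> k))\<^sup>2 + 18 * G\<^sup>2"
proof -
  define x' p where "x' = X \<omega> (Suc k)" and "p = proxg (Z \<omega> k)"
  define vh where "vh = (1 / \<mu>) *\<^sub>R (Z \<omega> k - \<mu> *\<^sub>R Dir \<omega> k - x')"
  define vg where "vg = (1 / \<mu>) *\<^sub>R (Z \<omega> k - p)"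
  have "is_subgradient h x' vh"
    unfolding vh_def x'_def X_Suc proxh_def by (rule prox_subgradient[OF h_pcc mu_pos])
  hence nvh: "norm vh \<le> G" using h_sub_bd by blast
  have "is_subgradient (\<lambda>y. ereal (g y)) p vg"
    unfolding vg_def p_def proxg_def by (rule prox_subgradient[OF g_pcc mu_pos])
  hence nvg: "norm vg \<le> G" using g_sub_bd by blast
  have eq: "\<rho> *\<^sub>R grad_pen c c' x' = U \<omega> k - gradf x' - vh + vg"
    unfolding U_def vh_def vg_def gradQ_def x'_def p_def using mu_pos by (simp add: algebra_simps)
  have "norm (\<rho> *\<^sub>R grad_pen c c' x') \<le> norm (U \<omega> k) + norm (gradf x') + norm vh + norm vg"
    unfolding eq using norm_triangle_ineq[of "U \<omega> k - gradf x' - vh" vg] norm_triangle_ineq4[of "U \<omega> k - gradf x'" vh]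
      norm_triangle_ineq4[of "U \<omega> k" "gradf x'"] by linarith
  hence "\<rho> * norm (grad_pen c c' x') \<le> norm (U \<omega> k) + 3 * G"
    using nvh nvg gradf_bd[rule_format, of x'] rho_pos by (simp add: abs_of_pos)
  hence "(\<rho> * norm (grad_pen c c' x'))\<^sup>2 \<le> (norm (U \<omega> k) + 3 * G)\<^sup>2"
    using rho_pos by (intro power_mono) auto
  also have "\<dots> \<le> 2 * (norm (U \<omega> k))\<^sup>2 + 18 * G\<^sup>2"
    using sum_squares_bound[of "norm (U \<omega> k)" "3 * G"] by (simp add: power2_sum power_mult_distrib)
  finally show ?thesis unfolding x'_def by (simp add: power_mult_distrib)
qed

abbreviation "\<Omega> \<equiv> PiM UNIV (\<lambda>_::nat. Xi)"

lemma prob_space_\<Omega>: "prob_space \<Omega>"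
  using prob unfolding sequence_space_def product_prob_space_def product_prob_space_axioms_def
    product_sigma_finite_def by (auto intro: prob_space_imp_sigma_finite prob_space_PiM)

lemma continuous_on_gradf: "continuous_on UNIV gradf"
  by (rule lipschitz_on_continuous_on[of Lf]) (auto simp: lipschitz_on_def dist_norm f_smooth Lf_nonneg)

lemma
  assumes [measurable]: "F \<in> borel_measurable M"
  shows proxh_measurable[measurable (raw)]: "(\<lambda>x. proxh (F x)) \<in> borel_measurable M"
    and proxg_measurable[measurable (raw)]: "(\<lambda>x. proxg (F x)) \<in> borel_measurable M"
    and gradf_measurable[measurable (raw)]: "(\<lambda>x. gradf (F x)) \<in> borel_measurable M"
    and grad_pen_measurable[measurable (raw)]: "(\<lambda>x. grad_pen c c' (F x)) \<in> borel_measurable M"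
    and f_measurable[measurable (raw)]: "(\<lambda>x. f (F x)) \<in> borel_measurable M"
    and c_measurable[measurable (raw)]: "(\<lambda>x. c (F x)) \<in> borel_measurable M"
    and h_measurable[measurable (raw)]: "(\<lambda>x. h (F x)) \<in> borel_measurable M"
    and g_measurable[measurable (raw)]: "(\<lambda>x. g (F x)) \<in> borel_measurable M"
proof -
  have cont: "continuous_on UNIV f" "continuous_on UNIV c"
    using f_deriv c_deriv by (meson continuous_at_imp_continuous_on has_derivative_continuous)+
  have "(\<lambda>y. ereal (g y)) \<in> borel_measurable borel"
    by (rule borel_measurable_proper_closed_convex[OF g_pcc])
  hence "g \<in> borel_measurable borel" by simp
  thus "(\<lambda>x. g (F x)) \<in> borel_measurable M" by measurable
  show "(\<lambda>x. h (F x)) \<in> borel_measurable M"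
    using borel_measurable_proper_closed_convex[OF h_pcc] by measurable
  show "(\<lambda>x. proxh (F x)) \<in> borel_measurable M" "(\<lambda>x. proxg (F x)) \<in> borel_measurable M"
    "(\<lambda>x. gradf (F x)) \<in> borel_measurable M" "(\<lambda>x. grad_pen c c' (F x)) \<in> borel_measurable M"
    "(\<lambda>x. f (F x)) \<in> borel_measurable M" "(\<lambda>x. c (F x)) \<in> borel_measurable M"
    unfolding proxh_def proxg_def
    using continuous_on_prox[OF h_pcc mu_pos] continuous_on_prox[OF g_pcc mu_pos]
      continuous_on_gradf continuous_on_grad_pen cont
    by (auto intro: measurable_compose[OF _ borel_measurable_continuous_onI])
qed

lemma gradQ_measurable[measurable (raw)]:
  assumes [measurable]: "F \<in> borel_measurable M"
  shows "(\<lambda>x. gradQ (F x)) \<in> borel_measurable M"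
  unfolding gradQ_def by measurable

lemma moreau_measurable[measurable (raw)]:
  assumes [measurable]: "F \<in> borel_measurable M"
  shows "(\<lambda>x. moreau \<mu> g (F x)) \<in> borel_measurable M"
  unfolding moreau_eq_prox[OF g_pcc mu_pos] proxg_def[symmetric] by measurable

lemma gf_measurable[measurable (raw)]:
  assumes "F \<in> borel_measurable M" "T \<in> measurable M Xi"
  shows "(\<lambda>x. gf (F x) (T x)) \<in> borel_measurable M"
proof -
  have "(\<lambda>x. (F x, T x)) \<in> measurable M (borel \<Otimes>\<^sub>M Xi)" using assms by measurable
  from measurable_compose[OF this gf_meas] show ?thesis by simp
qed

lemma iterates_measurable:
  "(\<lambda>\<omega>. X \<omega> k) \<in> borel_measurable \<Omega> \<and> (\<lambda>\<omega>. Z \<omega> k) \<in> borel_measurable \<Omega>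
    \<and> (\<lambda>\<omega>. Est \<omega> k) \<in> borel_measurable \<Omega>"
proof (induction k)
  case 0
  show ?case unfolding X_0 Z_0 Est_0 by measurable
next
  case (Suc k)
  hence [measurable]: "(\<lambda>\<omega>. X \<omega> k) \<in> borel_measurable \<Omega>" "(\<lambda>\<omega>. Z \<omega> k) \<in> borel_measurable \<Omega>"
    "(\<lambda>\<omega>. Est \<omega> k) \<in> borel_measurable \<Omega>" by auto
  have [measurable]: "(\<lambda>\<omega>. X \<omega> (Suc k)) \<in> borel_measurable \<Omega>" unfolding X_Suc Dir_def by measurable
  show ?case unfolding Z_Suc Est_Suc by measurable
qed

lemma X_measurable[measurable]: "(\<lambda>\<omega>. X \<omega> k) \<in> borel_measurable \<Omega>"
  and Z_measurable[measurable]: "(\<lambda>\<omega>. Z \<omega> k) \<in> borel_measurable \<Omega>"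
  and Est_measurable[measurable]: "(\<lambda>\<omega>. Est \<omega> k) \<in> borel_measurable \<Omega>"
  using iterates_measurable by auto

lemma Err_measurable[measurable]: "(\<lambda>\<omega>. Err \<omega> k) \<in> borel_measurable \<Omega>"
  and U_measurable[measurable]: "(\<lambda>\<omega>. U \<omega> k) \<in> borel_measurable \<Omega>"
  unfolding Err_def U_def Dir_def by measurable

lemma Pot_measurable[measurable]:
  "(\<lambda>\<omega>. Pot (X \<omega> k) (Z \<omega> k)) \<in> borel_measurable \<Omega>"
  unfolding Pot_def Q_def by measurable

lemma h_X_Suc_finite: "\<bar>h (X \<omega> (Suc k))\<bar> \<noteq> \<infinity>"
  unfolding X_Suc proxh_def by (rule prox_value_finite[OF h_pcc mu_pos])

text \<open>The new sample \<open>\<omega> (b0 + k)\<close> is independent of \<open>x\<^sup>k\<close>, \<open>x\<^sup>k\<^sup>+\<^sup>1\<close> and \<open>e\<^sup>k\<close>, which depend only on the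
  earlier coordinates.\<close>

lemma nn_integral_ErrSq_Suc_le:
  "(\<integral>\<^sup>+\<omega>. ennreal (ErrSq \<omega> (Suc k)) \<partial>\<Omega>)
    \<le> (\<integral>\<^sup>+\<omega>. ennreal ((1 - \<alpha>)\<^sup>2 * ErrSq \<omega> k + 2 * \<alpha>\<^sup>2 * \<sigma>\<^sup>2 + 2 * Lf\<^sup>2 * StepSq \<omega> k) \<partial>\<Omega>)"
proof -
  define G where "G p = ennreal ((norm ((1 - \<alpha>) *\<^sub>R Err (fst p) k
      + ((gf (X (fst p) (Suc k)) (snd p) - gradf (X (fst p) (Suc k)))
         - (1 - \<alpha>) *\<^sub>R (gf (X (fst p) k) (snd p) - gradf (X (fst p) k)))))\<^sup>2)" for p
  have "G \<in> borel_measurable (\<Omega> \<Otimes>\<^sub>M Xi)" unfolding G_def by measurable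
  moreover have "G (\<omega>, \<xi>) = G (\<omega>', \<xi>)" if "\<And>j. j < b0 + k \<Longrightarrow> \<omega> j = \<omega>' j" for \<omega> \<omega>' \<xi>
  proof -
    have "iter \<omega> k = iter \<omega>' k" by (rule iter_cong) (rule that)
    hence "X \<omega> k = X \<omega>' k" "Z \<omega> k = Z \<omega>' k" "Est \<omega> k = Est \<omega>' k"
      by (simp_all add: X_def Z_def Est_def)
    thus ?thesis by (simp add: G_def Err_def Dir_def X_Suc)
  qed
  ultimately have "(\<integral>\<^sup>+\<omega>. G (\<omega>, \<omega> (b0 + k)) \<partial>\<Omega>) = (\<integral>\<^sup>+\<omega>. (\<integral>\<^sup>+\<xi>. G (\<omega>, \<xi>) \<partial>Xi) \<partial>\<Omega>)"
    by (rule nn_integral_PiM_fresh_coordinate[OF prob])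
  also have "\<dots> \<le> (\<integral>\<^sup>+\<omega>. ennreal ((1 - \<alpha>)\<^sup>2 * (norm (Err \<omega> k))\<^sup>2 + 2 * \<alpha>\<^sup>2 * \<sigma>\<^sup>2
                        + 2 * Lf\<^sup>2 * (norm (X \<omega> (Suc k) - X \<omega> k))\<^sup>2) \<partial>\<Omega>)"
  proof (rule nn_integral_mono)
    fix \<omega>
    have "gf y \<in> borel_measurable Xi" for y using gf_measurable[of "\<lambda>_. y" Xi "\<lambda>\<xi>. \<xi>"] by simp
    hence "(\<integral>\<^sup>+\<xi>. G (\<omega>, \<xi>) \<partial>Xi) \<le> ennreal ((norm ((1 - \<alpha>) *\<^sub>R Err \<omega> k))\<^sup>2 + 2 * \<alpha>\<^sup>2 * \<sigma>\<^sup>2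
        + 2 * Lf\<^sup>2 * (norm (X \<omega> (Suc k) - X \<omega> k))\<^sup>2)"
      unfolding G_def fst_conv snd_conv using alpha_pos alpha_ub
      by (intro momentum_error_second_moment[OF prob _ A2_unbiased A2_var A4_lip]) auto
    thus "(\<integral>\<^sup>+\<xi>. G (\<omega>, \<xi>) \<partial>Xi) \<le> ennreal ((1 - \<alpha>)\<^sup>2 * (norm (Err \<omega> k))\<^sup>2 + 2 * \<alpha>\<^sup>2 * \<sigma>\<^sup>2
        + 2 * Lf\<^sup>2 * (norm (X \<omega> (Suc k) - X \<omega> k))\<^sup>2)"
      by (simp add: power_mult_distrib)
  qed
  finally show ?thesis unfolding ErrSq_def StepSq_def Err_Suc G_def by simp
qed

end

section \<open>Expected descent and telescoping\<close>

text \<open>Unless the starting potential and the initial estimator error are finite, the bound to be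
  proved is \<open>\<infinity>\<close> (see \<open>rate_bounds\<close>).\<close>

locale mossp_finite_start = mossp_setting +
  fixes \<mu>bar :: real
  assumes Fstar_fin: "(INF y. ereal (f y) + h y - ereal (g y)) > -\<infinity>"
    and h_x0: "h x0 \<noteq> \<infinity>"
    and Err_0_finite: "(\<integral>\<^sup>+\<omega>. ennreal ((norm (Err \<omega> 0))\<^sup>2) \<partial>\<Omega>) < \<infinity>"
    and mubar: "\<mu> \<le> \<mu>bar"
begin

definition "Lstar = real_of_ereal (INF y. ereal (f y) + h y - ereal (g y)) - G\<^sup>2 * \<mu>bar / 2"

lemma h_x0_finite: "\<bar>h x0\<bar> \<noteq> \<infinity>"
  using h_x0 proper_closed_convexD(1)[OF h_pcc, of x0] by (cases "h x0") auto

lemma h_X_finite: "\<bar>h (X \<omega> k)\<bar> \<noteq> \<infinity>"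
  by (cases k) (simp_all add: X_0 h_x0_finite h_X_Suc_finite)

lemma Lstar_le_Pot:
  assumes "\<bar>h x\<bar> \<noteq> \<infinity>"
  shows "Lstar \<le> Pot x z"
proof -
  define Fstar where "Fstar = (INF y. ereal (f y) + h y - ereal (g y))"
  obtain a where a: "h x = ereal a" using assms by (cases "h x") auto
  have Fstar_le: "Fstar \<le> ereal (f x) + h x - ereal (g x)"
    unfolding Fstar_def by (rule INF_lower) simp
  hence "Fstar \<noteq> \<infinity>" using a by auto
  moreover have "Fstar \<noteq> -\<infinity>" using Fstar_fin unfolding Fstar_def by simp
  ultimately obtain r where "Fstar = ereal r" by (cases Fstar) auto
  with Fstar_le a have "real_of_ereal Fstar \<le> f x + a - g x" by simp
  moreover have "moreau \<mu> g z \<le> g x + (norm (x - z))\<^sup>2 / (2 * \<mu>)" by (rule moreau_le[OF g_pcc mu_pos])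
  moreover have "\<rho> * ((norm (c x))\<^sup>2 / 2) \<ge> 0" "G\<^sup>2 * \<mu>bar / 2 \<ge> 0" using rho_pos mu_pos mubar by simp_all
  ultimately show ?thesis unfolding Pot_def Q_def Lstar_def Fstar_def[symmetric] using a by simp
qed

definition "Gap \<omega> k = Pot (X \<omega> k) (Z \<omega> k) - Lstar"

lemma Gap_measurable[measurable]: "(\<lambda>\<omega>. Gap \<omega> k) \<in> borel_measurable \<Omega>"
  and StepSq_measurable[measurable]: "(\<lambda>\<omega>. StepSq \<omega> k) \<in> borel_measurable \<Omega>"
  and ProxSq_measurable[measurable]: "(\<lambda>\<omega>. ProxSq \<omega> k) \<in> borel_measurable \<Omega>"
  and ErrSq_measurable[measurable]: "(\<lambda>\<omega>. ErrSq \<omega> k) \<in> borel_measurable \<Omega>"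
  unfolding Gap_def StepSq_def ProxSq_def ErrSq_def by measurable

lemma Gap_nonneg: "Gap \<omega> k \<ge> 0"
  unfolding Gap_def using Lstar_le_Pot[OF h_X_finite] by simp

lemma ErrSq_nonneg: "ErrSq \<omega> k \<ge> 0" and StepSq_nonneg: "StepSq \<omega> k \<ge> 0"
  and ProxSq_nonneg: "ProxSq \<omega> k \<ge> 0"
  by (simp_all add: ErrSq_def StepSq_def ProxSq_def)

lemma gap_descent:
  "Gap \<omega> (Suc k) + StepSq \<omega> k / (4 * \<mu>) + \<beta> / (2 * \<mu>) * ProxSq \<omega> k \<le> Gap \<omega> k + 2 * \<mu> * ErrSq \<omega> k"
  using potential_descent[OF h_X_finite, of \<omega> k] unfolding Gap_def by linarith

lemma
  shows StepSq_le: "StepSq \<omega> k \<le> 4 * \<mu> * (Gap \<omega> k + 2 * \<mu> * ErrSq \<omega> k)"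
    and ProxSq_le: "ProxSq \<omega> k \<le> (2 * \<mu> / \<beta>) * (Gap \<omega> k + 2 * \<mu> * ErrSq \<omega> k)"
    and Gap_Suc_le: "Gap \<omega> (Suc k) \<le> Gap \<omega> k + 2 * \<mu> * ErrSq \<omega> k"
proof -
  have "StepSq \<omega> k / (4 * \<mu>) \<ge> 0" "\<beta> / (2 * \<mu>) * ProxSq \<omega> k \<ge> 0"
    using mu_pos beta StepSq_nonneg ProxSq_nonneg by simp_all
  with gap_descent[of \<omega> k] Gap_nonneg[of \<omega> "Suc k"]
  have "StepSq \<omega> k / (4 * \<mu>) \<le> Gap \<omega> k + 2 * \<mu> * ErrSq \<omega> k"
    "\<beta> / (2 * \<mu>) * ProxSq \<omega> k \<le> Gap \<omega> k + 2 * \<mu> * ErrSq \<omega> k"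
    "Gap \<omega> (Suc k) \<le> Gap \<omega> k + 2 * \<mu> * ErrSq \<omega> k" by linarith+
  thus "StepSq \<omega> k \<le> 4 * \<mu> * (Gap \<omega> k + 2 * \<mu> * ErrSq \<omega> k)"
    "ProxSq \<omega> k \<le> (2 * \<mu> / \<beta>) * (Gap \<omega> k + 2 * \<mu> * ErrSq \<omega> k)"
    "Gap \<omega> (Suc k) \<le> Gap \<omega> k + 2 * \<mu> * ErrSq \<omega> k"
    using mu_pos beta by (simp_all add: field_simps)
qed

lemma integrable_Gap_ErrSq:
  "integrable \<Omega> (\<lambda>\<omega>. Gap \<omega> k) \<and> integrable \<Omega> (\<lambda>\<omega>. ErrSq \<omega> k)"
proof (induction k)
  case 0
  have "integrable \<Omega> (\<lambda>\<omega>. ErrSq \<omega> 0)"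
    using Err_0_finite by (intro integrableI_nonneg) (simp_all add: ErrSq_def)
  moreover have "finite_measure \<Omega>" using prob_space_\<Omega> by (simp add: prob_space_def)
  ultimately show ?case by (simp add: Gap_def X_0 Z_0 finite_measure.integrable_const)
next
  case (Suc k)
  hence IH: "integrable \<Omega> (\<lambda>\<omega>. Gap \<omega> k + 2 * \<mu> * ErrSq \<omega> k)" by auto
  have "integrable \<Omega> (\<lambda>\<omega>. Gap \<omega> (Suc k))"
    by (rule integrable_nonneg_le[OF IH]) (simp_all add: Gap_nonneg Gap_Suc_le)
  moreover have "integrable \<Omega> (\<lambda>\<omega>. StepSq \<omega> k)"
    by (rule integrable_nonneg_le[of _ "\<lambda>\<omega>. 4 * \<mu> * (Gap \<omega> k + 2 * \<mu> * ErrSq \<omega> k)"])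
       (use IH StepSq_le StepSq_nonneg in auto)
  hence "(\<integral>\<^sup>+\<omega>. ennreal ((1 - \<alpha>)\<^sup>2 * ErrSq \<omega> k + 2 * \<alpha>\<^sup>2 * \<sigma>\<^sup>2 + 2 * Lf\<^sup>2 * StepSq \<omega> k) \<partial>\<Omega>) < \<infinity>"
    using Suc prob_space_\<Omega> ErrSq_nonneg StepSq_nonneg
    by (subst nn_integral_eq_integral) (auto simp: prob_space_def finite_measure.integrable_const)
  hence "(\<integral>\<^sup>+\<omega>. ennreal (ErrSq \<omega> (Suc k)) \<partial>\<Omega>) < \<infinity>"
    using nn_integral_ErrSq_Suc_le[of k] by (meson le_less_trans)
  hence "integrable \<Omega> (\<lambda>\<omega>. ErrSq \<omega> (Suc k))"
    by (intro integrableI_nonneg) (simp_all add: ErrSq_nonneg)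
  ultimately show ?case by simp
qed

lemma integrable_Gap: "integrable \<Omega> (\<lambda>\<omega>. Gap \<omega> k)"
  and integrable_ErrSq: "integrable \<Omega> (\<lambda>\<omega>. ErrSq \<omega> k)"
  and integrable_StepSq: "integrable \<Omega> (\<lambda>\<omega>. StepSq \<omega> k)"
  and integrable_ProxSq: "integrable \<Omega> (\<lambda>\<omega>. ProxSq \<omega> k)"
proof -
  show IG: "integrable \<Omega> (\<lambda>\<omega>. Gap \<omega> k)" and IE: "integrable \<Omega> (\<lambda>\<omega>. ErrSq \<omega> k)"
    using integrable_Gap_ErrSq by auto
  have IH: "integrable \<Omega> (\<lambda>\<omega>. Gap \<omega> k + 2 * \<mu> * ErrSq \<omega> k)" using IG IE by auto
  show "integrable \<Omega> (\<lambda>\<omega>. StepSq \<omega> k)"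
    by (rule integrable_nonneg_le[of _ "\<lambda>\<omega>. 4 * \<mu> * (Gap \<omega> k + 2 * \<mu> * ErrSq \<omega> k)"])
       (use IH StepSq_le StepSq_nonneg in auto)
  show "integrable \<Omega> (\<lambda>\<omega>. ProxSq \<omega> k)"
    by (rule integrable_nonneg_le[of _ "\<lambda>\<omega>. (2 * \<mu> / \<beta>) * (Gap \<omega> k + 2 * \<mu> * ErrSq \<omega> k)"])
       (use IH ProxSq_le ProxSq_nonneg in auto)
qed

lemma expected_gap_descent:
  "(\<integral>\<omega>. Gap \<omega> (Suc k) \<partial>\<Omega>) + (\<integral>\<omega>. StepSq \<omega> k \<partial>\<Omega>) / (4 * \<mu>) + \<beta> / (2 * \<mu>) * (\<integral>\<omega>. ProxSq \<omega> k \<partial>\<Omega>)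
     \<le> (\<integral>\<omega>. Gap \<omega> k \<partial>\<Omega>) + 2 * \<mu> * (\<integral>\<omega>. ErrSq \<omega> k \<partial>\<Omega>)"
proof -
  have "(\<integral>\<omega>. Gap \<omega> (Suc k) + StepSq \<omega> k / (4 * \<mu>) + \<beta> / (2 * \<mu>) * ProxSq \<omega> k \<partial>\<Omega>)
      \<le> (\<integral>\<omega>. Gap \<omega> k + 2 * \<mu> * ErrSq \<omega> k \<partial>\<Omega>)"
    by (intro integral_mono gap_descent)
       (simp_all add: integrable_Gap integrable_ErrSq integrable_StepSq integrable_ProxSq)
  thus ?thesis by (simp add: integrable_Gap integrable_ErrSq integrable_StepSq integrable_ProxSq)
qed

lemma expected_ErrSq_Suc_le:
  "(\<integral>\<omega>. ErrSq \<omega> (Suc k) \<partial>\<Omega>) + \<alpha> * (\<integral>\<omega>. ErrSq \<omega> k \<partial>\<Omega>)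
     \<le> (\<integral>\<omega>. ErrSq \<omega> k \<partial>\<Omega>) + 2 * \<alpha>\<^sup>2 * \<sigma>\<^sup>2 + 2 * Lf\<^sup>2 * (\<integral>\<omega>. StepSq \<omega> k \<partial>\<Omega>)"
proof -
  interpret prob_space \<Omega> by (rule prob_space_\<Omega>)
  define F where "F \<omega> = (1 - \<alpha>)\<^sup>2 * ErrSq \<omega> k + 2 * \<alpha>\<^sup>2 * \<sigma>\<^sup>2 + 2 * Lf\<^sup>2 * StepSq \<omega> k" for \<omega>
  have IF: "integrable \<Omega> F" unfolding F_def by (simp add: integrable_ErrSq integrable_StepSq)
  have "ennreal (\<integral>\<omega>. ErrSq \<omega> (Suc k) \<partial>\<Omega>) = (\<integral>\<^sup>+\<omega>. ennreal (ErrSq \<omega> (Suc k)) \<partial>\<Omega>)"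
    by (intro nn_integral_eq_integral[symmetric] integrable_ErrSq AE_I2) (simp add: ErrSq_nonneg)
  also have "\<dots> \<le> (\<integral>\<^sup>+\<omega>. ennreal (F \<omega>) \<partial>\<Omega>)"
    using nn_integral_ErrSq_Suc_le[of k] by (simp add: F_def)
  also have "\<dots> = ennreal (\<integral>\<omega>. F \<omega> \<partial>\<Omega>)"
    by (intro nn_integral_eq_integral[OF IF] AE_I2) (simp add: F_def ErrSq_nonneg StepSq_nonneg)
  finally have "(\<integral>\<omega>. ErrSq \<omega> (Suc k) \<partial>\<Omega>) \<le> (\<integral>\<omega>. F \<omega> \<partial>\<Omega>)"
    by (rule ennreal_le_iff[THEN iffD1, rotated])
       (simp add: F_def ErrSq_nonneg StepSq_nonneg integral_nonneg_AE)
  also have "(\<integral>\<omega>. F \<omega> \<partial>\<Omega>) = (1 - \<alpha>)\<^sup>2 * (\<integral>\<omega>. ErrSq \<omega> k \<partial>\<Omega>) + 2 * \<alpha>\<^sup>2 * \<sigma>\<^sup>2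
      + 2 * Lf\<^sup>2 * (\<integral>\<omega>. StepSq \<omega> k \<partial>\<Omega>)"
    unfolding F_def by (simp add: integrable_ErrSq integrable_StepSq prob_space)
  finally have le: "(\<integral>\<omega>. ErrSq \<omega> (Suc k) \<partial>\<Omega>) \<le> (1 - \<alpha>)\<^sup>2 * (\<integral>\<omega>. ErrSq \<omega> k \<partial>\<Omega>)
      + 2 * \<alpha>\<^sup>2 * \<sigma>\<^sup>2 + 2 * Lf\<^sup>2 * (\<integral>\<omega>. StepSq \<omega> k \<partial>\<Omega>)" .
  have "(1 - \<alpha>)\<^sup>2 + \<alpha> \<le> 1"
    using alpha_pos alpha_ub by (simp add: power2_eq_square algebra_simps mult_le_cancel_left1)
  hence "((1 - \<alpha>)\<^sup>2 + \<alpha>) * (\<integral>\<omega>. ErrSq \<omega> k \<partial>\<Omega>) \<le> 1 * (\<integral>\<omega>. ErrSq \<omega> k \<partial>\<Omega>)"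
    by (rule mult_right_mono) (simp add: ErrSq_nonneg integral_nonneg_AE)
  thus ?thesis using le by (simp add: distrib_right)
qed

definition "err0 = (\<integral>\<omega>. ErrSq \<omega> 0 \<partial>\<Omega>)"
definition "budget K = Pot x0 x0 - Lstar + (2 * \<mu> / \<alpha>) * err0 + 4 * real K * \<mu> * \<alpha> * \<sigma>\<^sup>2"
definition "noise K = err0 / \<alpha> + 2 * real K * \<alpha> * \<sigma>\<^sup>2"

lemma err0_nonneg: "err0 \<ge> 0"
  unfolding err0_def by (simp add: ErrSq_nonneg integral_nonneg_AE)

lemma Lstar_le_Pot_x0: "Lstar \<le> Pot x0 x0"
  by (rule Lstar_le_Pot[OF h_x0_finite])

text \<open>Lyapunov function \<open>E Gap\<^sub>k + (2\<mu>/\<alpha>) E\<parallel>e\<^sub>k\<parallel>\<^sup>2\<close>: the bound \<open>32 \<mu>\<^sup>2 L\<^sub>f\<^sup>2 \<le> \<alpha>\<close> lets half of the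
  decrease \<open>\<parallel>x\<^sub>k\<^sub>+\<^sub>1 - x\<^sub>k\<parallel>\<^sup>2/(4\<mu>)\<close> pay for the variance injected by the momentum estimator.\<close>

lemma sum_expected_StepSq_ProxSq_le:
  "(\<Sum>k<K. \<integral>\<omega>. StepSq \<omega> k \<partial>\<Omega>) / (8 * \<mu>) + \<beta> / (2 * \<mu>) * (\<Sum>k<K. \<integral>\<omega>. ProxSq \<omega> k \<partial>\<Omega>)
     \<le> budget K"
proof -
  interpret prob_space \<Omega> by (rule prob_space_\<Omega>)
  define \<Phi> where "\<Phi> k = (\<integral>\<omega>. Gap \<omega> k \<partial>\<Omega>) + (2 * \<mu> / \<alpha>) * (\<integral>\<omega>. ErrSq \<omega> k \<partial>\<Omega>)" for k
  have "\<Phi> (Suc k) + ((\<integral>\<omega>. StepSq \<omega> k \<partial>\<Omega>) / (8 * \<mu>) + \<beta> / (2 * \<mu>) * (\<integral>\<omega>. ProxSq \<omega> k \<partial>\<Omega>))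
      \<le> \<Phi> k + 4 * \<mu> * \<alpha> * \<sigma>\<^sup>2" for k
  proof -
    let ?s = "\<integral>\<omega>. StepSq \<omega> k \<partial>\<Omega>"
    have "(2 * \<mu> / \<alpha>) * ((\<integral>\<omega>. ErrSq \<omega> (Suc k) \<partial>\<Omega>) + \<alpha> * (\<integral>\<omega>. ErrSq \<omega> k \<partial>\<Omega>))
        \<le> (2 * \<mu> / \<alpha>) * ((\<integral>\<omega>. ErrSq \<omega> k \<partial>\<Omega>) + 2 * \<alpha>\<^sup>2 * \<sigma>\<^sup>2 + 2 * Lf\<^sup>2 * ?s)"
      using expected_ErrSq_Suc_le mu_pos alpha_pos by (intro mult_left_mono) auto
    hence "(2 * \<mu> / \<alpha>) * (\<integral>\<omega>. ErrSq \<omega> (Suc k) \<partial>\<Omega>) + 2 * \<mu> * (\<integral>\<omega>. ErrSq \<omega> k \<partial>\<Omega>)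
        \<le> (2 * \<mu> / \<alpha>) * (\<integral>\<omega>. ErrSq \<omega> k \<partial>\<Omega>) + 4 * \<mu> * \<alpha> * \<sigma>\<^sup>2 + (4 * \<mu> * Lf\<^sup>2 / \<alpha>) * ?s"
      using alpha_pos by (simp add: field_simps power2_eq_square)
    moreover have "(4 * \<mu> * Lf\<^sup>2 / \<alpha>) * ?s \<le> (1 / (8 * \<mu>)) * ?s"
      using alpha_lb(2) mu_pos alpha_pos
      by (intro mult_right_mono) (auto simp: field_simps power2_eq_square StepSq_nonneg integral_nonneg_AE)
    moreover have "?s / (4 * \<mu>) = 2 * ((1 / (8 * \<mu>)) * ?s)" "?s / (8 * \<mu>) = (1 / (8 * \<mu>)) * ?s"
      by simp_all
    ultimately show ?thesis using expected_gap_descent[of k] unfolding \<Phi>_def by linarith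
  qed
  moreover have "\<Phi> K \<ge> 0"
    unfolding \<Phi>_def using mu_pos alpha_pos
    by (simp add: Gap_nonneg ErrSq_nonneg integral_nonneg_AE)
  ultimately have "(\<Sum>k<K. (\<integral>\<omega>. StepSq \<omega> k \<partial>\<Omega>) / (8 * \<mu>) + \<beta> / (2 * \<mu>) * (\<integral>\<omega>. ProxSq \<omega> k \<partial>\<Omega>))
      \<le> \<Phi> 0 + real K * (4 * \<mu> * \<alpha> * \<sigma>\<^sup>2)"
    by (rule sum_le_of_telescoping)
  moreover have "\<Phi> 0 = Pot x0 x0 - Lstar + (2 * \<mu> / \<alpha>) * err0"
    unfolding \<Phi>_def err0_def by (simp add: Gap_def X_0 Z_0 prob_space)
  ultimately show ?thesis
    unfolding budget_def by (simp add: sum.distrib sum_divide_distrib sum_distrib_left algebra_simps)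
qed

lemma sum_expected_ErrSq_le:
  "\<alpha> * (\<Sum>k<K. \<integral>\<omega>. ErrSq \<omega> k \<partial>\<Omega>)
     \<le> err0 + 2 * real K * \<alpha>\<^sup>2 * \<sigma>\<^sup>2 + 2 * Lf\<^sup>2 * (\<Sum>k<K. \<integral>\<omega>. StepSq \<omega> k \<partial>\<Omega>)"
proof -
  have "(\<Sum>k<K. \<alpha> * (\<integral>\<omega>. ErrSq \<omega> k \<partial>\<Omega>) - 2 * Lf\<^sup>2 * (\<integral>\<omega>. StepSq \<omega> k \<partial>\<Omega>))
      \<le> (\<integral>\<omega>. ErrSq \<omega> 0 \<partial>\<Omega>) + real K * (2 * \<alpha>\<^sup>2 * \<sigma>\<^sup>2)"
    using expected_ErrSq_Suc_le
    by (intro sum_le_of_telescoping) (auto simp: ErrSq_nonneg integral_nonneg_AE algebra_simps)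
  thus ?thesis
    unfolding err0_def by (simp add: sum_subtractf sum_distrib_left algebra_simps)
qed

lemma sum_expected_ProxSq_le:
  "(\<Sum>k<K. \<integral>\<omega>. ProxSq \<omega> k \<partial>\<Omega>) \<le> (2 * \<mu> / \<beta>) * budget K"
proof -
  have "(\<Sum>k<K. \<integral>\<omega>. StepSq \<omega> k \<partial>\<Omega>) / (8 * \<mu>) \<ge> 0"
    using mu_pos by (simp add: sum_nonneg StepSq_nonneg integral_nonneg_AE)
  hence "\<beta> / (2 * \<mu>) * (\<Sum>k<K. \<integral>\<omega>. ProxSq \<omega> k \<partial>\<Omega>) \<le> budget K"
    using sum_expected_StepSq_ProxSq_le[of K] by linarith
  thus ?thesis using mu_pos beta by (simp add: field_simps)
qed

lemma integrable_U_sq: "integrable \<Omega> (\<lambda>\<omega>. (norm (U \<omega> k))\<^sup>2)"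
  by (rule integrable_nonneg_le[OF _ _ _ norm_U_sq_le])
     (simp_all add: integrable_StepSq integrable_ErrSq integrable_ProxSq)

lemma integrable_grad_pen_sq: "integrable \<Omega> (\<lambda>\<omega>. (norm (grad_pen c c' (X \<omega> (Suc k))))\<^sup>2)"
proof (rule integrable_nonneg_le[of _ "\<lambda>\<omega>. (2 * (norm (U \<omega> k))\<^sup>2 + 18 * G\<^sup>2) / \<rho>\<^sup>2"])
  fix \<omega>
  show "(norm (grad_pen c c' (X \<omega> (Suc k))))\<^sup>2 \<le> (2 * (norm (U \<omega> k))\<^sup>2 + 18 * G\<^sup>2) / \<rho>\<^sup>2"
    using rho_sq_norm_grad_pen_le[of \<omega> k] rho_pos by (simp add: field_simps)
qed (use integrable_U_sq prob_space_\<Omega> in \<open>simp_all add: prob_space_def finite_measure.integrable_const\<close>)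

lemma sum_expected_U_sq_le_sums:
  "(\<Sum>k<K. \<integral>\<omega>. (norm (U \<omega> k))\<^sup>2 \<partial>\<Omega>)
     \<le> 3 * LQ\<^sup>2 * (\<Sum>k<K. \<integral>\<omega>. StepSq \<omega> k \<partial>\<Omega>) + 3 * (\<Sum>k<K. \<integral>\<omega>. ErrSq \<omega> k \<partial>\<Omega>)
       + 3 * (\<Sum>k<K. \<integral>\<omega>. ProxSq \<omega> k \<partial>\<Omega>) / \<mu>\<^sup>2"
proof -
  have "(\<Sum>k<K. \<integral>\<omega>. (norm (U \<omega> k))\<^sup>2 \<partial>\<Omega>)
      \<le> (\<Sum>k<K. \<integral>\<omega>. 3 * (LQ\<^sup>2 * StepSq \<omega> k + ErrSq \<omega> k + ProxSq \<omega> k / \<mu>\<^sup>2) \<partial>\<Omega>)"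
    by (intro sum_mono integral_mono norm_U_sq_le)
       (simp_all add: integrable_U_sq integrable_StepSq integrable_ErrSq integrable_ProxSq)
  also have "\<dots> = 3 * LQ\<^sup>2 * (\<Sum>k<K. \<integral>\<omega>. StepSq \<omega> k \<partial>\<Omega>) + 3 * (\<Sum>k<K. \<integral>\<omega>. ErrSq \<omega> k \<partial>\<Omega>)
       + 3 * (\<Sum>k<K. \<integral>\<omega>. ProxSq \<omega> k \<partial>\<Omega>) / \<mu>\<^sup>2"
    by (simp add: integrable_StepSq integrable_ErrSq integrable_ProxSq sum.distrib sum_distrib_left
        sum_divide_distrib algebra_simps)
  finally show ?thesis .
qed

text \<open>Both \<open>L\<^sub>Q\<^sup>2\<close> and \<open>2 L\<^sub>f\<^sup>2/\<alpha>\<close> are at most \<open>1/(16 \<mu>\<^sup>2)\<close>, so the telescoped bounds control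
  all three sums.\<close>

lemma sum_expected_U_sq_le:
  "(\<Sum>k<K. \<integral>\<omega>. (norm (U \<omega> k))\<^sup>2 \<partial>\<Omega>) \<le> 6 / (\<mu> * \<beta>) * budget K + 3 * noise K"
proof -
  define sx se sp where "sx = (\<Sum>k<K. \<integral>\<omega>. StepSq \<omega> k \<partial>\<Omega>)"
    and "se = (\<Sum>k<K. \<integral>\<omega>. ErrSq \<omega> k \<partial>\<Omega>)" and "sp = (\<Sum>k<K. \<integral>\<omega>. ProxSq \<omega> k \<partial>\<Omega>)"
  have sx: "sx \<ge> 0" unfolding sx_def by (simp add: sum_nonneg integral_nonneg_AE StepSq_nonneg)
  have step: "sx / (8 * \<mu>) + sp / \<mu> \<le> (2 / \<beta>) * budget K"
  proof -
    have "sx / (8 * \<mu>) \<le> (2 / \<beta>) * (sx / (8 * \<mu>))"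
      using mult_right_mono[of 1 "2 / \<beta>" "sx / (8 * \<mu>)"] beta sx mu_pos by simp
    moreover have "sp / \<mu> = (2 / \<beta>) * (\<beta> / (2 * \<mu>) * sp)" using beta mu_pos by (simp add: field_simps)
    moreover have "(2 / \<beta>) * (sx / (8 * \<mu>) + \<beta> / (2 * \<mu>) * sp) \<le> (2 / \<beta>) * budget K"
      using sum_expected_StepSq_ProxSq_le[of K] beta unfolding sx_def sp_def by (intro mult_left_mono) auto
    ultimately show ?thesis by (simp add: distrib_left)
  qed
  have "(\<Sum>k<K. \<integral>\<omega>. (norm (U \<omega> k))\<^sup>2 \<partial>\<Omega>) \<le> 3 * LQ\<^sup>2 * sx + 3 * se + 3 * sp / \<mu>\<^sup>2"
    unfolding sx_def se_def sp_def by (rule sum_expected_U_sq_le_sums)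
  also have "\<dots> \<le> 3 / (16 * \<mu>\<^sup>2) * sx + 3 * (noise K + (2 * Lf\<^sup>2 / \<alpha>) * sx) + 3 * sp / \<mu>\<^sup>2"
  proof -
    have "LQ \<le> 1 / (4 * \<mu>)" using mu_LQ_le mu_pos by (simp add: field_simps)
    hence "LQ\<^sup>2 \<le> (1 / (4 * \<mu>))\<^sup>2" using LQ_nonneg by (intro power_mono) auto
    hence "3 * LQ\<^sup>2 * sx \<le> 3 / (16 * \<mu>\<^sup>2) * sx"
      using sx by (intro mult_right_mono) (auto simp: power_divide power_mult_distrib)
    moreover have "se \<le> (err0 + 2 * real K * \<alpha>\<^sup>2 * \<sigma>\<^sup>2 + 2 * Lf\<^sup>2 * sx) / \<alpha>"
      using sum_expected_ErrSq_le[of K] alpha_pos unfolding se_def sx_def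
      by (simp add: pos_le_divide_eq mult.commute)
    moreover have "(err0 + 2 * real K * \<alpha>\<^sup>2 * \<sigma>\<^sup>2 + 2 * Lf\<^sup>2 * sx) / \<alpha> = noise K + (2 * Lf\<^sup>2 / \<alpha>) * sx"
      unfolding noise_def using alpha_pos by (simp add: field_simps power2_eq_square)
    ultimately show ?thesis by (intro add_mono) auto
  qed
  also have "\<dots> \<le> 3 / (16 * \<mu>\<^sup>2) * sx + 3 * (noise K + 1 / (16 * \<mu>\<^sup>2) * sx) + 3 * sp / \<mu>\<^sup>2"
    using alpha_lb(2) alpha_pos mu_pos sx
    by (intro add_mono mult_left_mono add_left_mono mult_right_mono) (auto simp: field_simps)
  also have "\<dots> = (3 / \<mu>) * (sx / (8 * \<mu>) + sp / \<mu>) + 3 * noise K"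
    using mu_pos by (simp add: field_simps power2_eq_square)
  also have "\<dots> \<le> (3 / \<mu>) * ((2 / \<beta>) * budget K) + 3 * noise K"
    using step mu_pos by (intro add_right_mono mult_left_mono) auto
  finally show ?thesis by simp
qed

lemma sum_expected_grad_pen_sq_le:
  "(\<Sum>k<K. \<integral>\<omega>. (norm (grad_pen c c' (X \<omega> (Suc k))))\<^sup>2 \<partial>\<Omega>)
     \<le> (2 * (\<Sum>k<K. \<integral>\<omega>. (norm (U \<omega> k))\<^sup>2 \<partial>\<Omega>) + 18 * real K * G\<^sup>2) / \<rho>\<^sup>2"
proof -
  interpret prob_space \<Omega> by (rule prob_space_\<Omega>)
  have "(\<Sum>k<K. \<integral>\<omega>. (norm (grad_pen c c' (X \<omega> (Suc k))))\<^sup>2 \<partial>\<Omega>)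
      \<le> (\<Sum>k<K. \<integral>\<omega>. (2 * (norm (U \<omega> k))\<^sup>2 + 18 * G\<^sup>2) / \<rho>\<^sup>2 \<partial>\<Omega>)"
    using rho_sq_norm_grad_pen_le rho_pos
    by (intro sum_mono integral_mono integrable_grad_pen_sq) (simp_all add: integrable_U_sq field_simps)
  also have "\<dots> = (2 * (\<Sum>k<K. \<integral>\<omega>. (norm (U \<omega> k))\<^sup>2 \<partial>\<Omega>) + 18 * real K * G\<^sup>2) / \<rho>\<^sup>2"
    by (simp add: integrable_U_sq prob_space sum.distrib sum_distrib_left sum_divide_distrib[symmetric])
  finally show ?thesis .
qed

lemma uniform_index_bounds:
  assumes K: "K \<ge> 1"
  defines "A \<equiv> 1/16 + 1/\<beta>\<^sup>2 + (\<mu>/\<beta>)\<^sup>2 / 3" and "B \<equiv> 1/16 + 1/\<beta>\<^sup>2"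
    and "v0 \<equiv> Pot x0 x0 - Lstar"
  defines "R1 \<equiv> (1 / real K) * ((96 + 768 * A) * \<mu> * Lf\<^sup>2 / \<alpha> + 24 * A / \<mu>) * v0
         + (48 * A + 6) / (\<alpha> * real K) * err0 + (96 * A + 12) * \<alpha> * \<sigma>\<^sup>2"
    and "R2 \<equiv> 2 / (\<rho>\<^sup>2 * real K) * ((144 + 768 / \<beta>\<^sup>2) * \<mu> * Lf\<^sup>2 / \<alpha> + 24 * B / \<mu>) * v0
         + (12 + 96 * B) / (\<alpha> * \<rho>\<^sup>2 * real K) * err0 + (24 + 192 * B) * \<alpha> * \<sigma>\<^sup>2 / \<rho>\<^sup>2 + 18 * G\<^sup>2 / \<rho>\<^sup>2"
  shows "(\<integral>\<^sup>+(\<omega>, r). ennreal ((norm (U \<omega> r))\<^sup>2) \<partial>(\<Omega> \<Otimes>\<^sub>M uniform_count_measure {..<K})) \<le> ennreal R1"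
    and "(\<integral>\<^sup>+(\<omega>, r). ennreal (ProxSq \<omega> r) \<partial>(\<Omega> \<Otimes>\<^sub>M uniform_count_measure {..<K})) \<le> ennreal R1"
    and "(\<integral>\<^sup>+(\<omega>, r). ennreal ((norm (grad_pen c c' (X \<omega> (Suc r))))\<^sup>2) \<partial>(\<Omega> \<Otimes>\<^sub>M uniform_count_measure {..<K}))
         \<le> ennreal R2"
proof -
  have "v0 \<ge> 0" unfolding v0_def using Lstar_le_Pot_x0 by simp
  note RC = rate_constants(1,2)[where Lf = Lf and \<sigma> = \<sigma>, OF mu_pos beta alpha_pos K rho_pos this err0_nonneg,
      folded A_def B_def, unfolded v0_def, folded budget_def noise_def]
    rate_constants(3)[where Lf = Lf and \<sigma> = \<sigma> and G = G, OF mu_pos beta alpha_pos K rho_pos this err0_nonneg,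
      folded A_def B_def, unfolded v0_def, folded budget_def noise_def]
  have sumU: "(\<Sum>k<K. \<integral>\<omega>. (norm (U \<omega> k))\<^sup>2 \<partial>\<Omega>) / real K
      \<le> (6 / (\<mu> * \<beta>) * budget K + 3 * noise K) / real K"
    using sum_expected_U_sq_le K by (intro divide_right_mono) auto
  show "(\<integral>\<^sup>+(\<omega>, r). ennreal ((norm (U \<omega> r))\<^sup>2) \<partial>(\<Omega> \<Otimes>\<^sub>M uniform_count_measure {..<K})) \<le> ennreal R1"
    unfolding nn_integral_uniform_index[OF integrable_U_sq zero_le_power2 K] R1_def v0_def
    using order_trans[OF sumU RC(1)] by (rule ennreal_leI)
  have "(\<Sum>k<K. \<integral>\<omega>. ProxSq \<omega> k \<partial>\<Omega>) / real K \<le> (2 * \<mu> / \<beta>) * budget K / real K"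
    using sum_expected_ProxSq_le K by (intro divide_right_mono) auto
  thus "(\<integral>\<^sup>+(\<omega>, r). ennreal (ProxSq \<omega> r) \<partial>(\<Omega> \<Otimes>\<^sub>M uniform_count_measure {..<K})) \<le> ennreal R1"
    unfolding nn_integral_uniform_index[OF integrable_ProxSq ProxSq_nonneg K] R1_def v0_def
    using RC(2) by (intro ennreal_leI) linarith
  have "(\<Sum>k<K. \<integral>\<omega>. (norm (grad_pen c c' (X \<omega> (Suc k))))\<^sup>2 \<partial>\<Omega>) / real K
      \<le> (2 * (\<Sum>k<K. \<integral>\<omega>. (norm (U \<omega> k))\<^sup>2 \<partial>\<Omega>) + 18 * real K * G\<^sup>2) / \<rho>\<^sup>2 / real K"
    using sum_expected_grad_pen_sq_le K by (intro divide_right_mono) auto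
  also have "\<dots> = (2 * ((\<Sum>k<K. \<integral>\<omega>. (norm (U \<omega> k))\<^sup>2 \<partial>\<Omega>) / real K) + 18 * G\<^sup>2) / \<rho>\<^sup>2"
    using K by (simp add: field_simps)
  also have "\<dots> \<le> R2"
    unfolding R2_def v0_def
    by (rule order_trans[OF _ RC(3)]) (intro divide_right_mono add_right_mono mult_left_mono[OF sumU]; simp)
  finally show "(\<integral>\<^sup>+(\<omega>, r). ennreal ((norm (grad_pen c c' (X \<omega> (Suc r))))\<^sup>2)
      \<partial>(\<Omega> \<Otimes>\<^sub>M uniform_count_measure {..<K})) \<le> ennreal R2"
    unfolding nn_integral_uniform_index[OF integrable_grad_pen_sq zero_le_power2 K]
    by (rule ennreal_leI)
qed

lemma Fstar_eq_ereal:
  "(INF y. ereal (f y) + h y - ereal (g y)) = ereal (real_of_ereal (INF y. ereal (f y) + h y - ereal (g y)))"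
proof -
  obtain a where a: "h x0 = ereal a" using h_x0_finite by (cases "h x0") auto
  have "(INF y. ereal (f y) + h y - ereal (g y)) \<le> ereal (f x0) + h x0 - ereal (g x0)"
    by (rule INF_lower) simp
  with a Fstar_fin show ?thesis by (cases "INF y. ereal (f y) + h y - ereal (g y)") auto
qed

lemma rate_bounds_ereal:
  assumes K: "K \<ge> 1"
  defines "A \<equiv> 1/16 + 1/\<beta>\<^sup>2 + (\<mu>/\<beta>)\<^sup>2 / 3" and "B \<equiv> 1/16 + 1/\<beta>\<^sup>2"
    and "Lw0 \<equiv> potential f c h g \<rho> \<mu> x0 x0"
    and "Ls \<equiv> (INF y. ereal (f y) + h y - ereal (g y)) - ereal (G\<^sup>2 * \<mu>bar / 2)"
  defines "Eu \<equiv> (\<integral>\<^sup>+(\<omega>, r). ennreal ((norm (U \<omega> r))\<^sup>2) \<partial>(\<Omega> \<Otimes>\<^sub>M uniform_count_measure {..<K}))"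
    and "Edist \<equiv> (\<integral>\<^sup>+(\<omega>, r). ennreal ((norm (X \<omega> (Suc r) - proxg (Z \<omega> r)))\<^sup>2)
                   \<partial>(\<Omega> \<Otimes>\<^sub>M uniform_count_measure {..<K}))"
    and "Ec \<equiv> (\<integral>\<^sup>+(\<omega>, r). ennreal ((norm (grad_pen c c' (X \<omega> (Suc r))))\<^sup>2)
                   \<partial>(\<Omega> \<Otimes>\<^sub>M uniform_count_measure {..<K}))"
    and "Ee0 \<equiv> (\<integral>\<^sup>+\<omega>. ennreal ((norm (Err \<omega> 0))\<^sup>2) \<partial>\<Omega>)"
  shows "enn2ereal (max Eu Edist) \<le>
           ereal ((1 / real K) * ((96 + 768 * A) * \<mu> * Lf\<^sup>2 / \<alpha> + 24 * A / \<mu>)) * (Lw0 - Ls)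
         + ereal ((48 * A + 6) / (\<alpha> * real K)) * enn2ereal Ee0
         + ereal ((96 * A + 12) * \<alpha> * \<sigma>\<^sup>2)
       \<and> enn2ereal Ec \<le>
           ereal (2 / (\<rho>\<^sup>2 * real K) * ((144 + 768 / \<beta>\<^sup>2) * \<mu> * Lf\<^sup>2 / \<alpha> + 24 * B / \<mu>)) * (Lw0 - Ls)
         + ereal ((12 + 96 * B) / (\<alpha> * \<rho>\<^sup>2 * real K)) * enn2ereal Ee0
         + ereal ((24 + 192 * B) * \<alpha> * \<sigma>\<^sup>2 / \<rho>\<^sup>2)
         + ereal (18 * G\<^sup>2 / \<rho>\<^sup>2)"
proof -
  obtain a where a: "h x0 = ereal a" using h_x0_finite by (cases "h x0") auto
  have "Lw0 - Ls = ereal (Pot x0 x0 - Lstar)"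
    unfolding Lw0_def Ls_def potential_def Pot_def Q_def Lstar_def using a
    by (subst Fstar_eq_ereal) simp
  moreover have "Ee0 = ennreal err0"
    unfolding Ee0_def err0_def ErrSq_def
    by (intro nn_integral_eq_integral integrable_ErrSq[unfolded ErrSq_def]) auto
  moreover have "v \<ge> 0 \<Longrightarrow> enn2ereal x \<le> ereal v \<longleftrightarrow> x \<le> ennreal v" for x v
    by (metis enn2ereal_ennreal less_eq_ennreal.rep_eq)
  moreover have "Pot x0 x0 - Lstar \<ge> 0" "A \<ge> 0" "B \<ge> 0"
    using Lstar_le_Pot_x0 unfolding A_def B_def by simp_all
  ultimately show ?thesis
    using uniform_index_bounds[OF K] err0_nonneg mu_pos alpha_pos rho_pos K
    unfolding Eu_def Edist_def Ec_def A_def B_def ProxSq_def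
    by (simp add: zero_le_mult_iff)
qed

end

context mossp_setting
begin

lemma rate_bounds:
  fixes K :: nat and \<mu>bar :: real
  defines "A \<equiv> 1/16 + 1/\<beta>\<^sup>2 + (\<mu>/\<beta>)\<^sup>2 / 3" and "B \<equiv> 1/16 + 1/\<beta>\<^sup>2"
    and "Lw0 \<equiv> potential f c h g \<rho> \<mu> x0 x0"
    and "Fstar \<equiv> (INF y. ereal (f y) + h y - ereal (g y))"
  defines "Eu \<equiv> (\<integral>\<^sup>+(\<omega>, r). ennreal ((norm (U \<omega> r))\<^sup>2) \<partial>(\<Omega> \<Otimes>\<^sub>M uniform_count_measure {..<K}))"
    and "Edist \<equiv> (\<integral>\<^sup>+(\<omega>, r). ennreal ((norm (X \<omega> (Suc r) - proxg (Z \<omega> r)))\<^sup>2)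
                   \<partial>(\<Omega> \<Otimes>\<^sub>M uniform_count_measure {..<K}))"
    and "Ec \<equiv> (\<integral>\<^sup>+(\<omega>, r). ennreal ((norm (grad_pen c c' (X \<omega> (Suc r))))\<^sup>2)
                   \<partial>(\<Omega> \<Otimes>\<^sub>M uniform_count_measure {..<K}))"
    and "Ee0 \<equiv> (\<integral>\<^sup>+\<omega>. ennreal ((norm (Err \<omega> 0))\<^sup>2) \<partial>\<Omega>)"
  assumes Fstar_fin: "Fstar > -\<infinity>" and mubar: "\<mu> \<le> \<mu>bar" and K: "K \<ge> 1"
  shows "enn2ereal (max Eu Edist) \<le>
           ereal ((1 / real K) * ((96 + 768 * A) * \<mu> * Lf\<^sup>2 / \<alpha> + 24 * A / \<mu>))
             * (Lw0 - (Fstar - ereal (G\<^sup>2 * \<mu>bar / 2)))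
         + ereal ((48 * A + 6) / (\<alpha> * real K)) * enn2ereal Ee0
         + ereal ((96 * A + 12) * \<alpha> * \<sigma>\<^sup>2)
       \<and> enn2ereal Ec \<le>
           ereal (2 / (\<rho>\<^sup>2 * real K) * ((144 + 768 / \<beta>\<^sup>2) * \<mu> * Lf\<^sup>2 / \<alpha> + 24 * B / \<mu>))
             * (Lw0 - (Fstar - ereal (G\<^sup>2 * \<mu>bar / 2)))
         + ereal ((12 + 96 * B) / (\<alpha> * \<rho>\<^sup>2 * real K)) * enn2ereal Ee0
         + ereal ((24 + 192 * B) * \<alpha> * \<sigma>\<^sup>2 / \<rho>\<^sup>2)
         + ereal (18 * G\<^sup>2 / \<rho>\<^sup>2)"
proof (cases "h x0 = \<infinity> \<or> Ee0 = \<infinity>")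
  case True
  obtain y a where "h y = ereal a" using proper_closed_convex_finite_point[OF h_pcc] .
  moreover have "Fstar \<le> ereal (f y) + h y - ereal (g y)" unfolding Fstar_def by (rule INF_lower) simp
  ultimately have "Fstar \<noteq> \<infinity>" by auto
  moreover have "Lw0 \<noteq> -\<infinity>" "h x0 = \<infinity> \<Longrightarrow> Lw0 = \<infinity>"
    unfolding Lw0_def potential_def using proper_closed_convexD(1)[OF h_pcc, of x0]
    by (cases "h x0"; simp)+
  ultimately have fin: "Lw0 - (Fstar - ereal (G\<^sup>2 * \<mu>bar / 2)) \<noteq> -\<infinity>"
    and inf: "Lw0 - (Fstar - ereal (G\<^sup>2 * \<mu>bar / 2)) = \<infinity> \<or> Ee0 = \<infinity>"
    using Fstar_fin True by (cases Fstar; cases Lw0; auto)+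
  have "A > 0" "B > 0" "real K > 0" unfolding A_def B_def using K by (simp_all add: add_pos_nonneg)
  moreover have "(96 + 768 * A) * \<mu> * Lf\<^sup>2 / \<alpha> + 24 * A / \<mu> > 0"
    "(144 + 768 / \<beta>\<^sup>2) * \<mu> * Lf\<^sup>2 / \<alpha> + 24 * B / \<mu> > 0"
    using \<open>A > 0\<close> \<open>B > 0\<close> mu_pos alpha_pos by (auto intro!: add_nonneg_pos)
  ultimately have "(1 / real K) * ((96 + 768 * A) * \<mu> * Lf\<^sup>2 / \<alpha> + 24 * A / \<mu>) > 0"
    "2 / (\<rho>\<^sup>2 * real K) * ((144 + 768 / \<beta>\<^sup>2) * \<mu> * Lf\<^sup>2 / \<alpha> + 24 * B / \<mu>) > 0"
    "(48 * A + 6) / (\<alpha> * real K) > 0" "(12 + 96 * B) / (\<alpha> * \<rho>\<^sup>2 * real K) > 0"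
    using alpha_pos rho_pos by (auto intro!: mult_pos_pos divide_pos_pos)
  note pos = this
  show ?thesis
    unfolding ereal_affine_eq_infinity[OF pos(1) pos(3) fin inf] ereal_affine_eq_infinity[OF pos(2) pos(4) fin inf]
    by simp
next
  case False
  interpret mossp_finite_start f gradf gf Xi c c' h g Lf Lc C G \<sigma> \<rho> \<rho>0 \<mu> \<alpha> \<beta> b0 x0 \<mu>bar
    using False Fstar_fin mubar unfolding Fstar_def Ee0_def
    by (intro mossp_finite_start.intro mossp_setting.intro mossp_finite_start_axioms.intro
        bounded_constraint_axioms mossp_setting_axioms) (auto simp: less_top)
  show ?thesis
    using rate_bounds_ereal[OF K] unfolding A_def B_def Lw0_def Fstar_def Eu_def Edist_def Ec_def Ee0_def
    by blast
qed

end

theorem lemmaC12: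
  fixes f :: "'a::euclidean_space \<Rightarrow> real" and gradf :: "'a \<Rightarrow> 'a"
    and ff :: "'a \<Rightarrow> 'c \<Rightarrow> real" and gf :: "'a \<Rightarrow> 'c \<Rightarrow> 'a" and Xi :: "'c measure"
    and c :: "'a \<Rightarrow> 'b::euclidean_space" and c' :: "'a \<Rightarrow> 'a \<Rightarrow> 'b"
    and h :: "'a \<Rightarrow> ereal" and g :: "'a \<Rightarrow> real"
    and Lf Lc C G \<sigma> \<rho> \<rho>0 \<mu> \<mu>bar \<alpha> \<beta> :: real and b0 K :: nat and x0 :: 'a
  defines "x \<equiv> (\<lambda>\<omega> k. fst (mossp gf c c' h g \<rho> \<mu> \<alpha> \<beta> b0 x0 \<omega> k))"
      and "z \<equiv> (\<lambda>\<omega> k. fst (snd (mossp gf c c' h g \<rho> \<mu> \<alpha> \<beta> b0 x0 \<omega> k)))"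
      and "d \<equiv> (\<lambda>\<omega> k. snd (snd (mossp gf c c' h g \<rho> \<mu> \<alpha> \<beta> b0 x0 \<omega> k)))"
  defines "gradQ \<equiv> (\<lambda>y. gradf y + \<rho> *\<^sub>R grad_pen c c' y)"
      and "D \<equiv> (\<lambda>\<omega> k. d \<omega> k + \<rho> *\<^sub>R grad_pen c c' (x \<omega> k))"
  defines "e \<equiv> (\<lambda>\<omega> k. D \<omega> k - gradQ (x \<omega> k))"
      and "u \<equiv> (\<lambda>\<omega> k. gradQ (x \<omega> (Suc k)) - D \<omega> k
                     + (1 / \<mu>) *\<^sub>R (prox \<mu> (\<lambda>y. ereal (g y)) (z \<omega> k) - x \<omega> (Suc k)))"
  defines "\<Omega> \<equiv> PiM UNIV (\<lambda>_::nat. Xi)"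
  defines "Fstar \<equiv> (INF y. ereal (f y) + h y - ereal (g y))"
  defines "Lstar \<equiv> Fstar - ereal (G\<^sup>2 * \<mu>bar / 2)"
      and "Lw0 \<equiv> potential f c h g \<rho> \<mu> x0 x0"
  defines "A \<equiv> 1/16 + 1/\<beta>\<^sup>2 + (\<mu>/\<beta>)\<^sup>2 / 3"
      and "B \<equiv> 1/16 + 1/\<beta>\<^sup>2"
  defines "Eu \<equiv> (\<integral>\<^sup>+ (\<omega>, r). ennreal ((norm (u \<omega> r))\<^sup>2) \<partial>(\<Omega> \<Otimes>\<^sub>M uniform_count_measure {..<K}))"
      and "Edist \<equiv> (\<integral>\<^sup>+ (\<omega>, r). ennreal ((norm (x \<omega> (Suc r) - prox \<mu> (\<lambda>y. ereal (g y)) (z \<omega> r)))\<^sup>2)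
                   \<partial>(\<Omega> \<Otimes>\<^sub>M uniform_count_measure {..<K}))"
      and "Ec \<equiv> (\<integral>\<^sup>+ (\<omega>, r). ennreal ((norm (grad_pen c c' (x \<omega> (Suc r))))\<^sup>2)
                   \<partial>(\<Omega> \<Otimes>\<^sub>M uniform_count_measure {..<K}))"
      and "Ee0 \<equiv> (\<integral>\<^sup>+ \<omega>. ennreal ((norm (e \<omega> 0))\<^sup>2) \<partial>\<Omega>)"
  assumes prob: "prob_space Xi"
    and f_deriv: "\<forall>y. (f has_derivative (\<lambda>v. gradf y \<bullet> v)) (at y)"
    and c_deriv: "\<forall>y. (c has_derivative c' y) (at y)"
    and h_pcc: "proper_closed_convex h"
    and g_pcc: "proper_closed_convex (\<lambda>y. ereal (g y))"
    \<comment> \<open>(A1)\<close>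
    and f_smooth: "\<forall>y y'. norm (gradf y - gradf y') \<le> Lf * norm (y - y')"
    and c_lip: "\<forall>y y'. onorm (\<lambda>v. adjoint (c' y) v - adjoint (c' y') v) \<le> Lc * norm (y - y')"
    and C_pos: "C > 0" and G_pos: "G > 0"
    and gradf_bd: "\<forall>y. norm (gradf y) \<le> G"
    and h_sub_bd: "\<forall>y v. is_subgradient h y v \<longrightarrow> norm v \<le> G"
    and g_sub_bd: "\<forall>y v. is_subgradient (\<lambda>y. ereal (g y)) y v \<longrightarrow> norm v \<le> G"
    and Dc_bd: "\<forall>y. onorm (adjoint (c' y)) \<le> G"
    and c_bd: "\<forall>y. norm (c y) \<le> C"
    \<comment> \<open>f is the expectation of the stochastic function\<close>
    and f_exp: "\<forall>y. integrable Xi (ff y) \<and> f y = (\<integral>\<xi>. ff y \<xi> \<partial>Xi)"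
    and gf_meas: "(\<lambda>(y, \<xi>). gf y \<xi>) \<in> borel_measurable (borel \<Otimes>\<^sub>M Xi)"
    \<comment> \<open>(A2)\<close>
    and A2_unbiased: "\<forall>y. integrable Xi (gf y) \<and> (\<integral>\<xi>. gf y \<xi> \<partial>Xi) = gradf y"
    and A2_var: "\<forall>y. (\<integral>\<^sup>+ \<xi>. ennreal ((norm (gf y \<xi> - gradf y))\<^sup>2) \<partial>Xi) \<le> ennreal (\<sigma>\<^sup>2)"
    \<comment> \<open>(A4)\<close>
    and A4_diff: "AE \<xi> in Xi. \<forall>y. ((\<lambda>y'. ff y' \<xi>) has_derivative (\<lambda>v. gf y \<xi> \<bullet> v)) (at y)"
    and A4_lip: "\<forall>y y'. (\<integral>\<^sup>+ \<xi>. ennreal ((norm (gf y \<xi> - gf y' \<xi>))\<^sup>2) \<partial>Xi)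
                        \<le> ennreal (Lf\<^sup>2 * (norm (y - y'))\<^sup>2)"
    and Fstar_fin: "Fstar > -\<infinity>"
    \<comment> \<open>parameters\<close>
    and rho0_pos: "\<rho>0 > 0" and rho0_le: "\<rho>0 \<le> \<rho>"
    and mu_pos: "\<mu> > 0" and mubar: "\<mu> \<le> \<mu>bar"
    and step: "\<mu> * (\<rho> * (Lf / \<rho>0 + G\<^sup>2 + C * Lc)) \<le> 1/4"
    and alpha_lb: "0 < 32 * \<mu>\<^sup>2 * Lf\<^sup>2" "32 * \<mu>\<^sup>2 * Lf\<^sup>2 \<le> \<alpha>" and alpha_ub: "\<alpha> \<le> 1"
    and beta: "0 < \<beta>" "\<beta> \<le> 1"
    and K_pos: "K \<ge> 1" and b0_pos: "b0 \<ge> 1"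
  shows "(enn2ereal (max Eu Edist) \<le>
           ereal ((1 / real K) * ((96 + 768 * A) * \<mu> * Lf\<^sup>2 / \<alpha> + 24 * A / \<mu>)) * (Lw0 - Lstar)
         + ereal ((48 * A + 6) / (\<alpha> * real K)) * enn2ereal Ee0
         + ereal ((96 * A + 12) * \<alpha> * \<sigma>\<^sup>2))
       \<and> (enn2ereal Ec \<le>
           ereal (2 / (\<rho>\<^sup>2 * real K) * ((144 + 768 / \<beta>\<^sup>2) * \<mu> * Lf\<^sup>2 / \<alpha> + 24 * B / \<mu>)) * (Lw0 - Lstar)
         + ereal ((12 + 96 * B) / (\<alpha> * \<rho>\<^sup>2 * real K)) * enn2ereal Ee0
         + ereal ((24 + 192 * B) * \<alpha> * \<sigma>\<^sup>2 / \<rho>\<^sup>2)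
         + ereal (18 * G\<^sup>2 / \<rho>\<^sup>2))"
proof -
  interpret M: mossp_setting f gradf gf Xi c c' h g Lf Lc C G \<sigma> \<rho> \<rho>0 \<mu> \<alpha> \<beta> b0 x0
    by (intro mossp_setting.intro bounded_constraint.intro mossp_setting_axioms.intro) (fact assms)+
  have iterates: "x = M.X" "z = M.Z" "D = M.Dir" "gradQ = M.gradQ"
    "prox \<mu> (\<lambda>y. ereal (g y)) = M.proxg"
    by (simp_all add: fun_eq_iff x_def z_def d_def D_def gradQ_def M.X_def M.Z_def M.Est_def
        M.Dir_def M.iter_def M.gradQ_def M.proxg_def)
  hence "e = M.Err" "u = M.U" by (simp_all add: fun_eq_iff e_def u_def M.Err_def M.U_def)
  with iterates show ?thesis
    using M.rate_bounds[OF Fstar_fin[unfolded Fstar_def] mubar K_pos]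
    unfolding Eu_def Edist_def Ec_def Ee0_def Lw0_def Lstar_def Fstar_def A_def B_def \<Omega>_def
    by simp
qed

end
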